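(* Let $\tau>0$ and $\delta\in(0,\delta_0]$. There is a constant $c$ (independent of $a$ and $t$) such that for all $a\in\mathbb{R}$, $0<t\le\tau$ and $i,j,k\in\{1,\dots,d\}$: $$\int_{\mathbb{R}}\Big(\frac{(|a|+|w|)^2|w|^2}{(h_i^{-1}(1/t))^2}\wedge1\Big)\mu_i^{(\delta)}(w)dw\le c\,\frac{t^{\alpha/(2\beta)}+|a|^\alpha+|a|^2}{t},$$ $$\int_{\mathbb{R}}\Big(\frac{(|a|+|w|)|w|^2}{(h_i^{-1}(1/t))^2}\wedge1\Big)\mu_i^{(\delta)}(w)dw\le c\,\frac{t^{\alpha/(3\beta)}+|a|^{\alpha/2}+|a|}{t},$$ $$\int_{\mathbb{R}}\Big(\frac{(|a|+|w|)^2|w|^2}{h_i^{-1}(1/t)h_j^{-1}(1/t)}\wedge1\Big)\mu_k^{(\delta)}(w)dw\le c\big[|a|^\beta t^{-\beta/\alpha}+t^{-\beta/(2\alpha)}\big],$$ $$\int_{\mathbb{R}}\Big(\frac{(|a|+|w|)|w|^2}{(h_i^{-1}(1/t))^2}\wedge1\Big)\mu_k^{(\delta)}(w)dw\le c\big[|a|^{\beta/2}t^{-\beta/\alpha}+t^{-2\beta/(3\alpha)}\big].$$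
   Context: Fix $d\ge2$. For $i=1,\dots,d$, let $\nu_i:\mathbb{R}\setminus\{0\}\to[0,\infty)$ be a symmetric density of an infinite Lévy measure ($\int(x^2\wedge1)\nu_i<\infty$), with a common $\eta_4>0$ such that $\nu_i\in C^1(0,\eta_4)$, $\nu_i'<0$ and $-\nu_i'(x)/x$ decreasing on $(0,\eta_4)$; $\psi_i(\xi)=\int(1-\cos(\xi x))\nu_i(x)dx$ satisfies $\psi_i(\lambda\theta)\ge\underline{C}\lambda^\alpha\psi_i(\theta)$ ($\lambda\ge1,\theta\ge0$) and $\psi_i(\lambda\theta)\le\overline{C}\lambda^\beta\psi_i(\theta)$ ($\lambda\ge1,\theta\ge1$), common $0<\alpha\le\beta<2$, $\underline{C},\overline{C}>0$. $h_i(r)=\int(1\wedge x^2r^{-2})\nu_i(x)dx$ ($r>0$), continuous and strictly decreasing from $\infty$ to $0$; $h_i^{-1}$ its inverse. Truncation: $\delta_0\in(0,1/24]$ is such that for every $\delta\in(0,\delta_0]$ and every $i$ one fixes $\mu_i^{(\delta)}:\mathbb{R}\setminus\{0\}\to[0,\infty)$ with $\mu_i^{(\delta)}=\nu_i$ on $(0,\delta]$, $\mu_i^{(\delta)}\in[0,\nu_i]$ on $(\delta,2\delta)$, $\mu_i^{(\delta)}=0$ on $[2\delta,\infty)$, $\mu_i^{(\delta)}\in C^1(0,\infty)$ nonincreasing on $(0,\infty)$, $-(\mu_i^{(\delta)})'(x)/x$ nonincreasing, and symmetric. *)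

theory Defs
  imports "HOL-Analysis.Analysis"
begin

definition psi :: "(real \<Rightarrow> real) \<Rightarrow> real \<Rightarrow> real" where
  "psi \<nu> \<xi> = (LINT x|lborel. (1 - cos (\<xi> * x)) * \<nu> x)"

definition hfun :: "(real \<Rightarrow> real) \<Rightarrow> real \<Rightarrow> real" where
  "hfun \<nu> r = (LINT x|lborel. min 1 (x\<^sup>2 / r\<^sup>2) * \<nu> x)"

definition hinv :: "(real \<Rightarrow> real) \<Rightarrow> real \<Rightarrow> real" where
  "hinv \<nu> s = (THE r. 0 < r \<and> hfun \<nu> r = s)"

definition levy_assms ::
  "nat \<Rightarrow> (nat \<Rightarrow> real \<Rightarrow> real) \<Rightarrow> real \<Rightarrow> real \<Rightarrow> real \<Rightarrow> real \<Rightarrow> real \<Rightarrow> bool" where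
  "levy_assms d \<nu> \<eta>4 \<alpha> \<beta> Cl Cu \<longleftrightarrow>
     2 \<le> d \<and> 0 < \<eta>4 \<and> 0 < \<alpha> \<and> \<alpha> \<le> \<beta> \<and> \<beta> < 2 \<and> 0 < Cl \<and> 0 < Cu \<and>
     (\<forall>i\<in>{1..d}.
        \<nu> i \<in> borel_measurable borel \<and>
        (\<forall>x. x \<noteq> 0 \<longrightarrow> 0 \<le> \<nu> i x) \<and>
        (\<forall>x. \<nu> i (- x) = \<nu> i x) \<and>
        integrable lborel (\<lambda>x. min (x\<^sup>2) 1 * \<nu> i x) \<and>
        (\<integral>\<^sup>+ x. ennreal (\<nu> i x) \<partial>lborel) = \<infinity> \<and>
        (\<exists>D. (\<forall>x\<in>{0<..<\<eta>4}. (\<nu> i has_real_derivative D x) (at x)) \<and>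
             continuous_on {0<..<\<eta>4} D \<and>
             (\<forall>x\<in>{0<..<\<eta>4}. D x < 0) \<and>
             (\<forall>x\<in>{0<..<\<eta>4}. \<forall>y\<in>{0<..<\<eta>4}. x \<le> y \<longrightarrow> - D y / y \<le> - D x / x)) \<and>
        (\<forall>lam \<theta>. 1 \<le> lam \<and> 0 \<le> \<theta> \<longrightarrow> psi (\<nu> i) (lam * \<theta>) \<ge> Cl * lam powr \<alpha> * psi (\<nu> i) \<theta>) \<and>
        (\<forall>lam \<theta>. 1 \<le> lam \<and> 1 \<le> \<theta> \<longrightarrow> psi (\<nu> i) (lam * \<theta>) \<le> Cu * lam powr \<beta> * psi (\<nu> i) \<theta>))"

definition trunc_assms ::
  "nat \<Rightarrow> (nat \<Rightarrow> real \<Rightarrow> real) \<Rightarrow> real \<Rightarrow> (real \<Rightarrow> nat \<Rightarrow> real \<Rightarrow> real) \<Rightarrow> bool" where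
  "trunc_assms d \<nu> \<delta>0 \<mu> \<longleftrightarrow>
     0 < \<delta>0 \<and> \<delta>0 \<le> 1/24 \<and>
     (\<forall>\<delta>\<in>{0<..\<delta>0}. \<forall>i\<in>{1..d}.
        (\<forall>x\<in>{0<..\<delta>}. \<mu> \<delta> i x = \<nu> i x) \<and>
        (\<forall>x\<in>{\<delta><..<2*\<delta>}. 0 \<le> \<mu> \<delta> i x \<and> \<mu> \<delta> i x \<le> \<nu> i x) \<and>
        (\<forall>x. 2*\<delta> \<le> x \<longrightarrow> \<mu> \<delta> i x = 0) \<and>
        (\<forall>x. \<mu> \<delta> i (- x) = \<mu> \<delta> i x) \<and>
        (\<exists>D. (\<forall>x\<in>{0<..}. (\<mu> \<delta> i has_real_derivative D x) (at x)) \<and>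
             continuous_on {0<..} D \<and>
             (\<forall>x\<in>{0<..}. \<forall>y\<in>{0<..}. x \<le> y \<longrightarrow> \<mu> \<delta> i y \<le> \<mu> \<delta> i x) \<and>
             (\<forall>x\<in>{0<..}. \<forall>y\<in>{0<..}. x \<le> y \<longrightarrow> - D y / y \<le> - D x / x)))"

end

theory Submission imports Defs begin

(* Write hsq \<nu> c = h(c^(-1/2)), so that hfun \<nu> r = hsq \<nu> (1/r^2) and hinv \<nu> (1/t) is the r with
   hsq \<nu> (1/r^2) = 1/t. Bounding 1 - cos y above and below by min (y^2) 1 (the lower bound after
   averaging over the frequency) makes hsq \<nu> (\<xi>^2) comparable to psi \<nu> \<xi>, so the weak scaling of psi
   passes to hsq: hsq \<nu> (\<kappa> c) <= C \<kappa>^(\<alpha>/2) hsq \<nu> c for \<kappa> <= 1, and c^(\<alpha>/2) <~ hsq \<nu> c <~ c^(\<beta>/2)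
   for c >= 1; hence t^(1/\<alpha>)/C <= hinv \<nu> (1/t), and hinv \<nu> (1/t) <= C t^(1/\<beta>) when it is small.
   Each integrand splits as min (A + B) 1 <= min (c1 w^2) 1 + min (c2 w^2) 1, so each integral against
   the truncated density is at most a sum of two truncated moments hsq_trunc. These are estimated
   either through the scaling of hsq at c = 1/hinv(1/t)^2, where hsq takes the value 1/t, or through
   hsq_trunc c <= C min c (c^(\<beta>/2)) combined with the lower bound on hinv. All constants can be
   taken to be one G, chosen large enough for the finitely many indices at once. *)

lemma one_minus_cos_le_min: "1 - cos (y::real) \<le> 2 * min (y\<^sup>2) 1"
proof -
  have "\<bar>sin (y/2)\<bar> \<le> \<bar>y/2\<bar>" by (rule abs_sin_x_le_abs_x)
  hence "sin (y/2) ^ 2 \<le> (y/2)^2" by (metis abs_le_square_iff power2_abs)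
  hence "1 - cos y \<le> y\<^sup>2 / 2" using cos_double_sin[of "y/2"] by (simp add: power_divide)
  moreover have "1 - cos y \<le> 2" using cos_ge_minus_one[of y] by linarith
  moreover have "0 \<le> y\<^sup>2" by simp
  ultimately show ?thesis unfolding min_def by argo
qed

lemma min_sq_le_one_minus_sinc:
  fixes y :: real
  assumes "y \<noteq> 0"
  shows "min (y\<^sup>2) 1 \<le> 15/2 * (1 - sin y / y)"
proof -
  define z where "z = \<bar>y\<bar>"
  have z: "z > 0" using assms z_def by auto
  have sinc: "sin y / y = sin z / z" by (cases "y \<ge> 0") (auto simp: z_def)
  show ?thesis
  proof (cases "z \<le> 2")
    case True
    have taylor: "(\<Sum>m<5. sin_coeff m * z ^ m) = z - z^3/6"
      by (simp add: sin_coeff_Suc cos_coeff_Suc eval_nat_numeral)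
    have "\<bar>sin z - (z - z^3/6)\<bar> \<le> z^5/120"
      using Maclaurin_sin_bound[of z 5] z unfolding taylor by (simp add: eval_nat_numeral)
    hence "sin z \<le> z - z^3/6 + z^5/120" by linarith
    hence "sin z / z \<le> 1 - z^2/6 + z^4/120" using z
      by (simp add: divide_simps power_def algebra_simps)
    moreover have "z^4 \<le> 4 * z^2"
    proof -
      have "z^2 \<le> 2^2" using True z by (intro power_mono) auto
      hence "z^2 * z^2 \<le> 4 * z^2" by (intro mult_right_mono) auto
      thus ?thesis by (simp add: power4_eq_xxxx power2_eq_square mult.assoc)
    qed
    ultimately have "2/15 * z^2 \<le> 1 - sin z / z" by linarith
    hence "15/2 * (2/15 * z^2) \<le> 15/2 * (1 - sin z / z)" by (rule mult_left_mono) simp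
    hence "z^2 \<le> 15/2 * (1 - sin z / z)" by simp
    thus ?thesis using sinc by (simp add: z_def min_def)
  next
    case False
    have "sin z / z \<le> 1 / z" using z by (simp add: divide_right_mono)
    also have "\<dots> \<le> 1/2" using False by simp
    finally show ?thesis using sinc by (simp add: min_def)
  qed
qed

lemma has_integral_one_minus_cos:
  fixes y :: real assumes "y \<noteq> 0"
  shows "((\<lambda>u. 1 - cos (u*y)) has_integral (1 - sin y / y)) {0..1}"
proof -
  have "((\<lambda>u. 1 - cos (u*y)) has_integral ((\<lambda>u. u - sin (u*y) / y) 1 - (\<lambda>u. u - sin (u*y) / y) 0)) {0..1}"
  proof (rule fundamental_theorem_of_calculus)
    fix x :: real assume "x \<in> {0..1}"
    have "((\<lambda>u. u - sin (u*y) / y) has_real_derivative (1 - cos (x*y))) (at x within {0..1})"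
      using assms by (auto intro!: derivative_eq_intros)
    thus "((\<lambda>u. u - sin (u*y) / y) has_vector_derivative (1 - cos (x*y))) (at x within {0..1})"
      by (simp add: has_real_derivative_iff_has_vector_derivative)
  qed simp
  thus ?thesis by simp
qed

lemma nn_integral_one_minus_cos:
  fixes y :: real assumes "y \<noteq> 0"
  shows "(\<integral>\<^sup>+u. ennreal (1 - cos (u*y)) * indicator {0..1} u \<partial>lborel) = ennreal (1 - sin y / y)"
  using nn_integral_has_integral_lebesgue'[OF _ has_integral_one_minus_cos[OF assms]]
  by (simp add: cos_le_one)

lemma min_mult_le_max_mult_min:
  fixes c X :: real assumes "0 \<le> c" "0 \<le> X"
  shows "min (c*X) 1 \<le> max c 1 * min X 1"
proof (cases "X \<le> 1")
  case True
  have "c * X \<le> max c 1 * X" using assms by (intro mult_right_mono) auto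
  thus ?thesis using True by (simp add: min_def)
next
  case False
  have "min (c*X) 1 \<le> 1" by simp
  also have "1 \<le> max c 1" by simp
  finally show ?thesis using False by simp
qed

lemma integral_pos_if_pos_on_interval:
  fixes f :: "real \<Rightarrow> real"
  assumes "integrable lborel f" and nonneg: "\<And>x. 0 \<le> f x"
    and pos: "\<And>x. 0 < x \<Longrightarrow> x < m \<Longrightarrow> 0 < f x" and "0 < m"
  shows "0 < integral\<^sup>L lborel f"
proof -
  have "integral\<^sup>L lborel f \<noteq> 0"
  proof
    assume "integral\<^sup>L lborel f = 0"
    hence "AE x in lborel. f x = 0"
      using integral_nonneg_eq_0_iff_AE[OF assms(1)] nonneg by auto
    hence "AE x in lborel. x \<notin> {0<..<m}"
      by eventually_elim (use pos in fastforce)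
    hence "emeasure lborel {0<..<m} = 0"
      by (subst (asm) AE_iff_measurable[where N="{0<..<m}"]) auto
    thus False using \<open>0 < m\<close> by (simp add: emeasure_lborel_Ioo)
  qed
  moreover have "0 \<le> integral\<^sup>L lborel f" by (intro integral_nonneg_AE AE_I2 nonneg)
  ultimately show ?thesis by linarith
qed

lemma sqrt_powr: "0 \<le> x \<Longrightarrow> sqrt x powr a = x powr (a/2)"
  by (simp add: powr_half_sqrt[symmetric] powr_powr)

lemma inverse_sq_powr: "0 < (r::real) \<Longrightarrow> (1/r\<^sup>2) powr q = 1 / r powr (2*q)"
  by (simp add: powr_divide powr_powr[symmetric])

lemma min_add_le: "0 \<le> A \<Longrightarrow> 0 \<le> B \<Longrightarrow> min (A + B) 1 \<le> min A 1 + min (B::real) 1"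
  by (simp add: min_def)

lemma min_power_le_min_power:
  fixes X :: real
  assumes "0 \<le> X" "m \<le> n"
  shows "min (X ^ n) 1 \<le> min (X ^ m) 1"
proof (cases "X \<le> 1")
  case True
  thus ?thesis using power_decreasing[OF assms(2,1) True] by (simp add: min_def)
next
  case False
  thus ?thesis using one_le_power[of X m] one_le_power[of X n] by (simp add: min_absorb2)
qed

lemma min_split_square:
  fixes a w p :: real assumes "0 < p"
  shows "min (((\<bar>a\<bar> + \<bar>w\<bar>)\<^sup>2 * \<bar>w\<bar>\<^sup>2) / p) 1 \<le> min (2*a\<^sup>2/p * w\<^sup>2) 1 + min (sqrt (2/p) * w\<^sup>2) 1"
proof -
  have "(\<bar>a\<bar> + \<bar>w\<bar>)\<^sup>2 \<le> 2*a\<^sup>2 + 2*w\<^sup>2"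
    using sum_squares_ge_zero[of "\<bar>a\<bar> - \<bar>w\<bar>" 0] by (simp add: power2_eq_square algebra_simps)
  hence "(\<bar>a\<bar> + \<bar>w\<bar>)\<^sup>2 * \<bar>w\<bar>\<^sup>2 \<le> (2*a\<^sup>2 + 2*w\<^sup>2) * w\<^sup>2" by (simp add: mult_right_mono)
  hence "((\<bar>a\<bar> + \<bar>w\<bar>)\<^sup>2 * \<bar>w\<bar>\<^sup>2) / p \<le> (2*a\<^sup>2 + 2*w\<^sup>2) * w\<^sup>2 / p"
    using assms by (intro divide_right_mono) auto
  also have "\<dots> = 2*a\<^sup>2/p * w\<^sup>2 + (sqrt (2/p) * w\<^sup>2)\<^sup>2"
    using assms by (simp add: power_mult_distrib field_simps power2_eq_square)
  finally have "min (((\<bar>a\<bar> + \<bar>w\<bar>)\<^sup>2 * \<bar>w\<bar>\<^sup>2) / p) 1 \<le> min (2*a\<^sup>2/p * w\<^sup>2 + (sqrt (2/p) * w\<^sup>2)\<^sup>2) 1"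
    by (rule min.mono) simp
  also have "\<dots> \<le> min (2*a\<^sup>2/p * w\<^sup>2) 1 + min ((sqrt (2/p) * w\<^sup>2)\<^sup>2) 1"
    using assms by (intro min_add_le) auto
  also have "min ((sqrt (2/p) * w\<^sup>2)\<^sup>2) 1 \<le> min ((sqrt (2/p) * w\<^sup>2)^1) 1"
    using assms by (intro min_power_le_min_power) auto
  finally show ?thesis by simp
qed

lemma min_split_cube:
  fixes a w q :: real assumes "0 < q"
  shows "min (((\<bar>a\<bar> + \<bar>w\<bar>) * \<bar>w\<bar>\<^sup>2) / q) 1 \<le> min (\<bar>a\<bar>/q * w\<^sup>2) 1 + min ((1/q) powr (2/3) * w\<^sup>2) 1"
proof -
  define s where "s = q powr (1/3)"
  have s: "0 < s" "s ^ 3 = q" using assms by (simp_all add: s_def powr_realpow[symmetric] powr_powr)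
  have "((\<bar>a\<bar> + \<bar>w\<bar>) * \<bar>w\<bar>\<^sup>2) / q = \<bar>a\<bar>/q * w\<^sup>2 + (\<bar>w\<bar>/s)^3"
    using s by (auto simp: field_simps power_def numeral_eq_Suc)
  hence "min (((\<bar>a\<bar> + \<bar>w\<bar>) * \<bar>w\<bar>\<^sup>2) / q) 1 \<le> min (\<bar>a\<bar>/q * w\<^sup>2) 1 + min ((\<bar>w\<bar>/s)^3) 1"
    using assms s by (auto intro: min_add_le)
  also have "min ((\<bar>w\<bar>/s)^3) 1 \<le> min ((\<bar>w\<bar>/s)\<^sup>2) 1" using s by (intro min_power_le_min_power) auto
  also have "(\<bar>w\<bar>/s)\<^sup>2 = (1/q) powr (2/3) * w\<^sup>2"
    using assms by (simp add: s_def power_divide powr_divide powr_powr powr_realpow[symmetric] field_simps)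
  finally show ?thesis by simp
qed

lemma inverse_le_powr_if_inverse_le:
  fixes t G g :: real
  assumes "0 < t" "1/G \<le> t" "1 \<le> G" "0 \<le> g" "g \<le> 1"
  shows "1/G \<le> t powr g"
proof (cases "t \<le> 1")
  case True
  hence "t \<le> t powr g" using powr_mono'[of g 1 t] assms by simp
  thus ?thesis using assms by simp
next
  case False
  hence "1 \<le> t powr g" using assms by (intro ge_one_powr_ge_zero) auto
  moreover have "1/G \<le> 1" using assms by simp
  ultimately show ?thesis by linarith
qed

lemma inverse_le_if_powr_div_le:
  fixes r t G \<alpha> :: real
  assumes "0 < r" "0 < G" "0 < t" "t powr (1/\<alpha>) / G \<le> r"
  shows "1/r \<le> G * t powr (-1/\<alpha>)"
proof -
  have "1/r \<le> 1/(t powr (1/\<alpha>) / G)" using assms by (intro divide_left_mono) auto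
  also have "\<dots> = G * t powr (-1/\<alpha>)" using assms by (simp add: powr_minus_divide[of t "1/\<alpha>", simplified])
  finally show ?thesis .
qed

lemma inverse_mult_le_if_powr_div_le:
  fixes r1 r2 t G \<alpha> :: real
  assumes "0 < r1" "0 < r2" "0 < G" "0 < t"
    and "t powr (1/\<alpha>) / G \<le> r1" "t powr (1/\<alpha>) / G \<le> r2"
  shows "1/(r1 * r2) \<le> G\<^sup>2 * t powr (-2/\<alpha>)"
proof -
  have "1/r1 * (1/r2) \<le> (G * t powr (-1/\<alpha>)) * (G * t powr (-1/\<alpha>))"
    using inverse_le_if_powr_div_le assms by (intro mult_mono) auto
  also have "\<dots> = G\<^sup>2 * t powr (-2/\<alpha>)" by (simp add: power2_eq_square powr_add[symmetric] mult_ac)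
  finally show ?thesis by simp
qed

lemma powr_two_mult_sq_le:
  fixes a p :: real
  assumes "0 \<le> p" "p \<le> 1"
  shows "(2 * a\<^sup>2) powr p \<le> 2 * \<bar>a\<bar> powr (2*p)"
proof -
  have "a\<^sup>2 = \<bar>a\<bar> powr 2" by simp
  hence "(2 * a\<^sup>2) powr p = 2 powr p * (\<bar>a\<bar> powr 2) powr p" by (simp only: powr_mult)
  also have "\<dots> = 2 powr p * \<bar>a\<bar> powr (2*p)" by (simp only: powr_powr)
  also have "\<dots> \<le> 2 * \<bar>a\<bar> powr (2*p)"
    using powr_mono[of p 1 2] assms by (intro mult_right_mono) auto
  finally show ?thesis .
qed

lemma weighted_sum_le:
  fixes X Y Z p q s C :: real
  assumes "0 \<le> X" "0 \<le> Y" "0 \<le> Z" "p \<le> C" "q \<le> C" "s \<le> C"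
  shows "p * X + q * Y + s * Z \<le> C * (X + Y + Z)"
proof -
  have "p * X \<le> C * X" "q * Y \<le> C * Y" "s * Z \<le> C * Z" using assms by (auto intro: mult_right_mono)
  thus ?thesis by (simp add: algebra_simps)
qed

section \<open>Truncated second moments of a Levy density\<close>

definition hsq :: "(real \<Rightarrow> real) \<Rightarrow> real \<Rightarrow> real" where
  "hsq \<nu> c = (LINT x|lborel. min (c * x\<^sup>2) 1 * \<nu> x)"

lemma hsq_zero: "hsq \<nu> 0 = 0"
  by (simp add: hsq_def)

definition hsq_trunc :: "(real \<Rightarrow> real) \<Rightarrow> real \<Rightarrow> real \<Rightarrow> real" where
  "hsq_trunc \<nu> R c = (LINT x|lborel. (min (c * x\<^sup>2) 1 * indicator {x. \<bar>x\<bar> < R} x) * \<nu> x)"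

locale levy_density =
  fixes \<nu> :: "real \<Rightarrow> real"
  assumes measurable[measurable]: "\<nu> \<in> borel_measurable borel"
    and nonneg: "\<And>x. x \<noteq> 0 \<Longrightarrow> 0 \<le> \<nu> x"
    and integrable_min_sq: "integrable lborel (\<lambda>x. min (x\<^sup>2) 1 * \<nu> x)"
begin

lemma integrable_mult_density:
  assumes [measurable]: "g \<in> borel_measurable borel" and bound: "\<And>x. \<bar>g x\<bar> \<le> C * min (x\<^sup>2) 1"
  shows "integrable lborel (\<lambda>x. g x * \<nu> x)"
proof (rule Bochner_Integration.integrable_bound)
  show "integrable lborel (\<lambda>x. C * (min (x\<^sup>2) 1 * \<nu> x))" using integrable_min_sq by simp
  show "AE x in lborel. norm (g x * \<nu> x) \<le> norm (C * (min (x\<^sup>2) 1 * \<nu> x))"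
  proof (rule AE_I2)
    fix x
    show "norm (g x * \<nu> x) \<le> norm (C * (min (x\<^sup>2) 1 * \<nu> x))"
    proof (cases "x = 0")
      case False
      have "\<bar>g x\<bar> * \<bar>\<nu> x\<bar> \<le> C * min (x\<^sup>2) 1 * \<nu> x"
        using bound[of x] nonneg[OF False] by (simp add: mult_right_mono)
      also have "\<dots> \<le> \<bar>C * (min (x\<^sup>2) 1 * \<nu> x)\<bar>" by (simp add: mult.assoc)
      finally show ?thesis by (simp add: abs_mult)
    qed (use bound[of 0] in simp)
  qed
qed measurable

lemma mult_density_nonneg: "0 \<le> g x \<Longrightarrow> g 0 = 0 \<Longrightarrow> 0 \<le> g x * \<nu> x"
  using nonneg[of x] by (cases "x = 0") auto

lemma mult_density_mono:
  "(x \<noteq> 0 \<Longrightarrow> f x \<le> g x) \<Longrightarrow> f 0 = 0 \<Longrightarrow> g 0 = 0 \<Longrightarrow> f x * \<nu> x \<le> g x * \<nu> x"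
  using nonneg[of x] by (cases "x = 0") (auto intro: mult_right_mono)

lemma integrable_hsq: "0 \<le> c \<Longrightarrow> integrable lborel (\<lambda>x. min (c * x\<^sup>2) 1 * \<nu> x)"
  by (rule integrable_mult_density[where C="max c 1"]) (auto intro!: min_mult_le_max_mult_min)

lemma integrable_hsq_trunc:
  assumes "0 \<le> c"
  shows "integrable lborel (\<lambda>x. (min (c * x\<^sup>2) 1 * indicator {x. \<bar>x\<bar> < R} x) * \<nu> x)"
proof (rule integrable_mult_density[where C="max c 1"])
  fix x
  have "\<bar>min (c * x\<^sup>2) 1 * indicator {x. \<bar>x\<bar> < R} x\<bar> \<le> min (c * x\<^sup>2) 1"
    using assms by (auto simp: indicator_def)
  also have "\<dots> \<le> max c 1 * min (x\<^sup>2) 1" using assms by (intro min_mult_le_max_mult_min) auto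
  finally show "\<bar>min (c * x\<^sup>2) 1 * indicator {x. \<bar>x\<bar> < R} x\<bar> \<le> max c 1 * min (x\<^sup>2) 1" .
qed measurable

lemma integrable_psi: "integrable lborel (\<lambda>x. (1 - cos (\<xi> * x)) * \<nu> x)"
proof (rule integrable_mult_density[where C="2 * max (\<xi>\<^sup>2) 1"])
  fix x
  have "\<bar>1 - cos (\<xi> * x)\<bar> \<le> 2 * min ((\<xi>*x)\<^sup>2) 1"
    using cos_le_one[of "\<xi>*x"] one_minus_cos_le_min[of "\<xi>*x"] by simp
  also have "\<dots> = 2 * min (\<xi>\<^sup>2 * x\<^sup>2) 1" by (simp add: power_mult_distrib)
  also have "\<dots> \<le> 2 * (max (\<xi>\<^sup>2) 1 * min (x\<^sup>2) 1)"
    by (intro mult_left_mono min_mult_le_max_mult_min) auto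
  finally show "\<bar>1 - cos (\<xi> * x)\<bar> \<le> 2 * max (\<xi>\<^sup>2) 1 * min (x\<^sup>2) 1" by simp
qed simp

lemma hsq_nonneg: "0 \<le> c \<Longrightarrow> 0 \<le> hsq \<nu> c"
  unfolding hsq_def
  by (intro integral_nonneg_AE AE_I2 mult_density_nonneg[where g="\<lambda>x. min (c * x\<^sup>2) 1"]) auto

lemma psi_nonneg: "0 \<le> psi \<nu> \<xi>"
  unfolding psi_def
  by (intro integral_nonneg_AE AE_I2 mult_density_nonneg[where g="\<lambda>x. 1 - cos (\<xi> * x)"]) auto

lemma hfun_eq_hsq: "0 < r \<Longrightarrow> hfun \<nu> r = hsq \<nu> (1/r\<^sup>2)"
  unfolding hfun_def hsq_def by (simp add: min.commute)

lemma psi_le_hsq: "psi \<nu> \<xi> \<le> 2 * hsq \<nu> (\<xi>\<^sup>2)"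
proof -
  have "psi \<nu> \<xi> \<le> (LINT x|lborel. (2 * min (\<xi>\<^sup>2 * x\<^sup>2) 1) * \<nu> x)"
    unfolding psi_def
  proof (rule integral_mono)
    show "integrable lborel (\<lambda>x. (2 * min (\<xi>\<^sup>2 * x\<^sup>2) 1) * \<nu> x)"
      using integrable_hsq[of "\<xi>\<^sup>2"] by (simp add: mult.assoc)
    show "(1 - cos (\<xi> * x)) * \<nu> x \<le> (2 * min (\<xi>\<^sup>2 * x\<^sup>2) 1) * \<nu> x" for x
      using one_minus_cos_le_min[of "\<xi> * x"] by (intro mult_density_mono) (auto simp: power_mult_distrib)
  qed (rule integrable_psi)
  also have "\<dots> = 2 * hsq \<nu> (\<xi>\<^sup>2)" unfolding hsq_def by (simp add: mult.assoc)
  finally show ?thesis .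
qed

lemma hsq_le_max_mult:
  assumes "0 \<le> c" "0 < c'"
  shows "hsq \<nu> c \<le> max (c/c') 1 * hsq \<nu> c'"
proof -
  have "hsq \<nu> c \<le> (LINT x|lborel. (max (c/c') 1 * min (c' * x\<^sup>2) 1) * \<nu> x)"
    unfolding hsq_def
  proof (rule integral_mono)
    show "integrable lborel (\<lambda>x. (max (c/c') 1 * min (c' * x\<^sup>2) 1) * \<nu> x)"
      using integrable_hsq[of c'] assms by (simp add: mult.assoc)
    fix x
    have "min (c * x\<^sup>2) 1 = min ((c/c') * (c' * x\<^sup>2)) 1" using assms by simp
    also have "\<dots> \<le> max (c/c') 1 * min (c' * x\<^sup>2) 1"
      using assms by (intro min_mult_le_max_mult_min) auto
    finally show "min (c * x\<^sup>2) 1 * \<nu> x \<le> (max (c/c') 1 * min (c' * x\<^sup>2) 1) * \<nu> x"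
      by (intro mult_density_mono) auto
  qed (use integrable_hsq assms in simp)
  also have "\<dots> = max (c/c') 1 * hsq \<nu> c'" unfolding hsq_def by (simp add: mult.assoc)
  finally show ?thesis .
qed

lemma hsq_mult_le: "0 < c \<Longrightarrow> 1 \<le> \<kappa> \<Longrightarrow> hsq \<nu> (\<kappa> * c) \<le> \<kappa> * hsq \<nu> c"
  using hsq_le_max_mult[of "\<kappa> * c" c] by (simp add: max_def)

lemma hsq_mono:
  assumes "0 \<le> c" "c \<le> c'"
  shows "hsq \<nu> c \<le> hsq \<nu> c'"
  unfolding hsq_def
proof (rule integral_mono)
  fix x
  have "min (c * x\<^sup>2) 1 \<le> min (c' * x\<^sup>2) 1" using assms by (intro min.mono mult_right_mono) auto
  thus "min (c * x\<^sup>2) 1 * \<nu> x \<le> min (c' * x\<^sup>2) 1 * \<nu> x" by (intro mult_density_mono) auto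
qed (use integrable_hsq assms in simp)+

lemma hsq_trunc_le_hsq:
  assumes "0 \<le> c"
  shows "hsq_trunc \<nu> R c \<le> hsq \<nu> c"
  unfolding hsq_def hsq_trunc_def
proof (rule integral_mono)
  show "(min (c * x\<^sup>2) 1 * indicator {x. \<bar>x\<bar> < R} x) * \<nu> x \<le> min (c * x\<^sup>2) 1 * \<nu> x" for x
    using assms by (intro mult_density_mono) (auto simp: indicator_def)
qed (use integrable_hsq integrable_hsq_trunc assms in simp)+

lemma hsq_trunc_le_linear:
  assumes "0 \<le> c" "R \<le> 1"
  shows "hsq_trunc \<nu> R c \<le> c * hsq \<nu> 1"
proof -
  have "hsq_trunc \<nu> R c \<le> (LINT x|lborel. (c * min (1 * x\<^sup>2) 1) * \<nu> x)"
    unfolding hsq_trunc_def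
  proof (rule integral_mono)
    show "integrable lborel (\<lambda>x. (c * min (1 * x\<^sup>2) 1) * \<nu> x)"
      using integrable_hsq[of 1] by (simp add: mult.assoc)
    fix x
    have "min (c * x\<^sup>2) 1 * indicator {x. \<bar>x\<bar> < R} x \<le> c * min (1 * x\<^sup>2) 1"
    proof (cases "\<bar>x\<bar> < R")
      case True
      hence "x\<^sup>2 \<le> 1" using assms by (simp add: abs_square_le_1)
      thus ?thesis using True by (simp add: indicator_def)
    qed (use assms in \<open>simp add: indicator_def\<close>)
    thus "(min (c * x\<^sup>2) 1 * indicator {x. \<bar>x\<bar> < R} x) * \<nu> x \<le> (c * min (1 * x\<^sup>2) 1) * \<nu> x"
      by (intro mult_density_mono) auto
  qed (use integrable_hsq_trunc assms in simp)
  also have "\<dots> = c * hsq \<nu> 1" unfolding hsq_def by (simp add: mult.assoc)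
  finally show ?thesis .
qed

lemma nn_integral_psi: "(\<integral>\<^sup>+x. ennreal ((1 - cos (\<xi> * x)) * \<nu> x) \<partial>lborel) = ennreal (psi \<nu> \<xi>)"
  unfolding psi_def
  by (intro nn_integral_eq_integral integrable_psi AE_I2
      mult_density_nonneg[where g="\<lambda>x. 1 - cos (\<xi> * x)"]) auto

lemma nn_integral_hsq:
  "0 \<le> c \<Longrightarrow> (\<integral>\<^sup>+x. ennreal (min (c * x\<^sup>2) 1 * \<nu> x) \<partial>lborel) = ennreal (hsq \<nu> c)"
  unfolding hsq_def
  by (intro nn_integral_eq_integral integrable_hsq AE_I2
      mult_density_nonneg[where g="\<lambda>x. min (c * x\<^sup>2) 1"]) auto

(* Averaging 1 - cos (u y) over u \<in> [0,1] gives 1 - sin y / y, which dominates min (y^2) 1 up to 15/2. *)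
lemma min_sq_le_nn_integral_cos:
  assumes "0 < \<xi>"
  shows "ennreal (min (\<xi>\<^sup>2 * x\<^sup>2) 1 * \<nu> x)
    \<le> (\<integral>\<^sup>+u. ennreal (15/2) * (ennreal ((1 - cos (u*\<xi>*x)) * \<nu> x) * indicator {0..1} u) \<partial>lborel)"
proof (cases "x = 0")
  case False
  define y where "y = \<xi> * x"
  have y: "y \<noteq> 0" using False assms by (simp add: y_def)
  have \<nu>x: "0 \<le> \<nu> x" using nonneg False by simp
  have "\<bar>sin y / y\<bar> \<le> 1"
    using abs_sin_x_le_abs_x[of y] y by (simp add: abs_divide divide_le_eq_1)
  hence "sin y / y \<le> 1" by (rule abs_le_D1)
  have "(\<integral>\<^sup>+u. ennreal (15/2) * (ennreal ((1 - cos (u*\<xi>*x)) * \<nu> x) * indicator {0..1} u) \<partial>lborel)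
      = (\<integral>\<^sup>+u. (ennreal (1 - cos (u*y)) * indicator {0..1} u) * (ennreal (15/2) * ennreal (\<nu> x)) \<partial>lborel)"
    unfolding y_def by (intro nn_integral_cong) (simp add: ennreal_mult' \<nu>x cos_le_one mult_ac)
  also have "\<dots> = ennreal (1 - sin y / y) * (ennreal (15/2) * ennreal (\<nu> x))"
    by (subst nn_integral_multc) (auto simp: nn_integral_one_minus_cos[OF y])
  also have "\<dots> = ennreal (15/2 * (1 - sin y / y) * \<nu> x)"
    using \<open>sin y / y \<le> 1\<close> \<nu>x
    by (simp add: ennreal_mult'[symmetric] ennreal_mult''[symmetric] mult.commute mult.left_commute)
  finally have eq: "(\<integral>\<^sup>+u. ennreal (15/2) * (ennreal ((1 - cos (u*\<xi>*x)) * \<nu> x) * indicator {0..1} u) \<partial>lborel)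
      = ennreal (15/2 * (1 - sin y / y) * \<nu> x)" .
  have "min (\<xi>\<^sup>2 * x\<^sup>2) 1 = min (y\<^sup>2) 1" by (simp add: y_def power_mult_distrib)
  hence "min (\<xi>\<^sup>2 * x\<^sup>2) 1 * \<nu> x \<le> 15/2 * (1 - sin y / y) * \<nu> x"
    using min_sq_le_one_minus_sinc[OF y] \<nu>x by (metis mult_right_mono)
  thus ?thesis unfolding eq by (rule ennreal_leI)
qed simp

lemma hsq_le_sup_psi:
  assumes "0 < \<xi>" and psi_le: "\<And>u. u \<in> {0..1} \<Longrightarrow> psi \<nu> (u*\<xi>) \<le> P" and "0 \<le> P"
  shows "hsq \<nu> (\<xi>\<^sup>2) \<le> 15/2 * P"
proof -
  define F where
    "F u x = ennreal (15/2) * (ennreal ((1 - cos (u*\<xi>*x)) * \<nu> x) * indicator {0..1::real} u)" for u x :: real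
  have F_integral: "(\<integral>\<^sup>+x. F u x \<partial>lborel) = ennreal (15/2) * (ennreal (psi \<nu> (u*\<xi>)) * indicator {0..1} u)"
    for u :: real
  proof -
    have "(\<integral>\<^sup>+x. F u x \<partial>lborel)
        = ennreal (15/2) * (\<integral>\<^sup>+x. ennreal ((1 - cos (u*\<xi>*x)) * \<nu> x) * indicator {0..1::real} u \<partial>lborel)"
      unfolding F_def by (rule nn_integral_cmult) measurable
    also have "\<dots> = ennreal (15/2) * ((\<integral>\<^sup>+x. ennreal ((1 - cos (u*\<xi>*x)) * \<nu> x) \<partial>lborel) * indicator {0..1::real} u)"
      by (subst nn_integral_multc) auto
    also have "\<dots> = ennreal (15/2) * (ennreal (psi \<nu> (u*\<xi>)) * indicator {0..1} u)"
      by (simp add: nn_integral_psi)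
    finally show ?thesis .
  qed
  have "ennreal (hsq \<nu> (\<xi>\<^sup>2)) = (\<integral>\<^sup>+x. ennreal (min (\<xi>\<^sup>2 * x\<^sup>2) 1 * \<nu> x) \<partial>lborel)"
    by (rule nn_integral_hsq[symmetric]) simp
  also have "\<dots> \<le> (\<integral>\<^sup>+x. (\<integral>\<^sup>+u. F u x \<partial>lborel) \<partial>lborel)"
    unfolding F_def by (intro nn_integral_mono min_sq_le_nn_integral_cos assms(1))
  also have "\<dots> = (\<integral>\<^sup>+u. (\<integral>\<^sup>+x. F u x \<partial>lborel) \<partial>lborel)"
    by (rule lborel_pair.Fubini') (unfold F_def, measurable)
  also have "\<dots> \<le> (\<integral>\<^sup>+u. ennreal (15/2) * (ennreal P * indicator {0..1::real} u) \<partial>lborel)"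
    unfolding F_integral using psi_le
    by (intro nn_integral_mono) (auto intro!: mult_left_mono ennreal_leI split: split_indicator)
  also have "\<dots> = ennreal (15/2 * P)"
    using \<open>0 \<le> P\<close> by (simp add: nn_integral_cmult nn_integral_multc ennreal_mult'[symmetric])
  finally show ?thesis using \<open>0 \<le> P\<close> by (simp add: ennreal_le_iff)
qed

lemma continuous_on_hsq: "continuous_on {0<..} (hsq \<nu>)"
proof (rule continuous_at_imp_continuous_on, safe)
  fix c0 :: real assume c0: "0 < c0"
  have pos: "eventually (\<lambda>c. 0 < c) (at c0)"
    using order_tendstoD(1)[OF tendsto_ident_at c0] .
  have upper: "((\<lambda>c. max (c/c0) 1 * hsq \<nu> c0) \<longlongrightarrow> max (c0/c0) 1 * hsq \<nu> c0) (at c0)"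
    using c0 by (intro tendsto_intros) auto
  have lower: "((\<lambda>c. hsq \<nu> c0 / max (c0/c) 1) \<longlongrightarrow> hsq \<nu> c0 / max (c0/c0) 1) (at c0)"
    using c0 by (intro tendsto_intros) auto
  have "(hsq \<nu> \<longlongrightarrow> hsq \<nu> c0) (at c0)"
  proof (rule tendsto_sandwich[OF _ _ lower[simplified] upper[simplified]])
    show "eventually (\<lambda>c. hsq \<nu> c0 / max (c0/c) 1 \<le> hsq \<nu> c) (at c0)"
      using pos
    proof eventually_elim
      case (elim c)
      have "hsq \<nu> c0 \<le> max (c0/c) 1 * hsq \<nu> c" using hsq_le_max_mult[of c0 c] c0 elim by simp
      thus ?case by (simp add: divide_le_eq mult.commute)
    qed
    show "eventually (\<lambda>c. hsq \<nu> c \<le> max (c/c0) 1 * hsq \<nu> c0) (at c0)"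
      using pos by eventually_elim (use hsq_le_max_mult c0 in auto)
  qed
  thus "isCont (hsq \<nu>) c0" by (simp add: isCont_def)
qed

lemma integral_min_split_le:
  assumes dominated: "\<And>w. w \<noteq> 0 \<Longrightarrow> \<mu> w \<le> \<nu> w * indicator {x. \<bar>x\<bar> < R} w"
    and "\<And>w. 0 \<le> F w" "F 0 = 0"
    and split: "\<And>w. w \<noteq> 0 \<Longrightarrow> min (F w) 1 \<le> min (c1 * w\<^sup>2) 1 + min (c2 * w\<^sup>2) 1"
    and "0 \<le> c1" "0 \<le> c2"
  shows "(LINT w|lborel. min (F w) 1 * \<mu> w) \<le> hsq_trunc \<nu> R c1 + hsq_trunc \<nu> R c2"
proof -
  define g where "g c w = (min (c * w\<^sup>2) 1 * indicator {x. \<bar>x\<bar> < R} w) * \<nu> w" for c w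
  have int: "integrable lborel (g c1)" "integrable lborel (g c2)"
    unfolding g_def using integrable_hsq_trunc assms by auto
  have g_nonneg: "0 \<le> g c w" if "0 \<le> c" for c w
    unfolding g_def using that
    by (intro mult_density_nonneg[where g="\<lambda>w. min (c * w\<^sup>2) 1 * indicator {x. \<bar>x\<bar> < R} w"]) auto
  have "min (F w) 1 * \<mu> w \<le> g c1 w + g c2 w" for w
  proof (cases "w = 0 \<or> R \<le> \<bar>w\<bar>")
    case True
    hence "min (F w) 1 * \<mu> w \<le> 0"
      using assms(2,3) dominated[of w] by (cases "w = 0") (auto intro: mult_nonneg_nonpos)
    also have "0 \<le> g c1 w + g c2 w" using g_nonneg assms by (simp add: add_nonneg_nonneg)
    finally show ?thesis .
  next
    case False
    hence "min (F w) 1 * \<mu> w \<le> min (F w) 1 * \<nu> w"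
      using dominated[of w] assms(2) by (intro mult_left_mono) auto
    also have "\<dots> \<le> (min (c1 * w\<^sup>2) 1 + min (c2 * w\<^sup>2) 1) * \<nu> w"
      using split[of w] nonneg[of w] False by (intro mult_right_mono) auto
    also have "\<dots> = g c1 w + g c2 w" using False by (simp add: g_def algebra_simps)
    finally show ?thesis .
  qed
  hence "(LINT w|lborel. min (F w) 1 * \<mu> w) \<le> (LINT w|lborel. g c1 w + g c2 w)"
    using int g_nonneg assms by (intro integral_mono_AE') auto
  also have "\<dots> = hsq_trunc \<nu> R c1 + hsq_trunc \<nu> R c2"
    unfolding hsq_trunc_def g_def using int[unfolded g_def] by simp
  finally show ?thesis .
qed

end

section \<open>Weak scaling of hsq and bounds on hinv\<close>

locale scaling_levy_density = levy_density +
  fixes \<alpha> \<beta> Cl Cu \<eta> :: real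
  assumes pos_near_0: "\<And>x. 0 < x \<Longrightarrow> x < \<eta> \<Longrightarrow> 0 < \<nu> x" and \<eta>_pos: "0 < \<eta>"
    and exponents: "0 < \<alpha>" "\<alpha> \<le> \<beta>" "\<beta> < 2" and Cl_pos: "0 < Cl" and Cu_pos: "0 < Cu"
    and psi_lower_scaling: "\<And>s \<theta>. 1 \<le> s \<Longrightarrow> 0 \<le> \<theta> \<Longrightarrow> Cl * s powr \<alpha> * psi \<nu> \<theta> \<le> psi \<nu> (s*\<theta>)"
    and psi_upper_scaling: "\<And>s \<theta>. 1 \<le> s \<Longrightarrow> 1 \<le> \<theta> \<Longrightarrow> psi \<nu> (s*\<theta>) \<le> Cu * s powr \<beta> * psi \<nu> \<theta>"
begin

lemma psi_scale_down:
  assumes "0 \<le> \<xi>" "0 < u" "u \<le> 1"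
  shows "Cl * psi \<nu> (u*\<xi>) \<le> u powr \<alpha> * psi \<nu> \<xi>"
proof -
  have "Cl * (1/u) powr \<alpha> * psi \<nu> (u*\<xi>) \<le> psi \<nu> \<xi>"
    using psi_lower_scaling[of "1/u" "u*\<xi>"] assms by simp
  hence le: "u powr \<alpha> * (Cl * (1/u) powr \<alpha> * psi \<nu> (u*\<xi>)) \<le> u powr \<alpha> * psi \<nu> \<xi>"
    by (rule mult_left_mono) simp
  have "u powr \<alpha> * (1/u) powr \<alpha> = 1" using assms by (simp add: powr_divide)
  hence "Cl * psi \<nu> (u*\<xi>) = (u powr \<alpha> * (1/u) powr \<alpha>) * (Cl * psi \<nu> (u*\<xi>))" by simp
  also have "\<dots> = u powr \<alpha> * (Cl * (1/u) powr \<alpha> * psi \<nu> (u*\<xi>))" by (simp add: mult_ac)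
  also have "\<dots> \<le> u powr \<alpha> * psi \<nu> \<xi>" by (rule le)
  finally show ?thesis .
qed

lemma hsq_le_psi:
  assumes "0 < \<xi>"
  shows "hsq \<nu> (\<xi>\<^sup>2) \<le> 15/(2*Cl) * psi \<nu> \<xi>"
proof -
  have "psi \<nu> (u*\<xi>) \<le> psi \<nu> \<xi> / Cl" if "u \<in> {0..1}" for u
  proof (cases "u = 0")
    case True
    thus ?thesis using psi_nonneg[of \<xi>] Cl_pos by (simp add: psi_def)
  next
    case False
    have "Cl * psi \<nu> (u*\<xi>) \<le> u powr \<alpha> * psi \<nu> \<xi>"
      using psi_scale_down False that assms by auto
    also have "\<dots> \<le> 1 * psi \<nu> \<xi>"
      using that exponents by (intro mult_right_mono powr_le1 psi_nonneg) auto
    finally show ?thesis using Cl_pos by (simp add: field_simps)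
  qed
  hence "hsq \<nu> (\<xi>\<^sup>2) \<le> 15/2 * (psi \<nu> \<xi> / Cl)"
    using psi_nonneg[of \<xi>] Cl_pos by (intro hsq_le_sup_psi assms) auto
  thus ?thesis by simp
qed

lemma psi_one_pos: "0 < psi \<nu> 1"
  unfolding psi_def
proof (rule integral_pos_if_pos_on_interval[where m="min \<eta> 1"])
  show "integrable lborel (\<lambda>x. (1 - cos (1 * x)) * \<nu> x)" by (rule integrable_psi)
  show "0 \<le> (1 - cos (1 * x)) * \<nu> x" for x
    by (rule mult_density_nonneg[where g="\<lambda>x. 1 - cos (1 * x)"]) auto
  fix x :: real assume x: "0 < x" "x < min \<eta> 1"
  have "cos x < cos 0" using x pi_gt3 by (intro cos_monotone_0_pi) auto
  thus "0 < (1 - cos (1 * x)) * \<nu> x" using pos_near_0 x by auto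
qed (use \<eta>_pos in auto)

lemma hsq_strict_mono:
  assumes "0 \<le> c" "c < c'"
  shows "hsq \<nu> c < hsq \<nu> c'"
proof -
  have int: "integrable lborel (\<lambda>x. min (c * x\<^sup>2) 1 * \<nu> x)" "integrable lborel (\<lambda>x. min (c' * x\<^sup>2) 1 * \<nu> x)"
    using integrable_hsq assms by simp_all
  have "0 < (LINT x|lborel. (min (c' * x\<^sup>2) 1 - min (c * x\<^sup>2) 1) * \<nu> x)"
  proof (rule integral_pos_if_pos_on_interval[where m="min \<eta> (1/(c'+1))"])
    fix x :: real
    have "min (c * x\<^sup>2) 1 \<le> min (c' * x\<^sup>2) 1" using assms by (intro min.mono mult_right_mono) auto
    thus "0 \<le> (min (c' * x\<^sup>2) 1 - min (c * x\<^sup>2) 1) * \<nu> x"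
      by (intro mult_density_nonneg[where g="\<lambda>x. min (c' * x\<^sup>2) 1 - min (c * x\<^sup>2) 1"]) auto
  next
    fix x :: real assume x: "0 < x" "x < min \<eta> (1/(c'+1))"
    have "1/(c'+1) \<le> 1" using assms by simp
    hence "x \<le> 1" using x by linarith
    hence "c' * x\<^sup>2 \<le> c' * x" using x assms by (simp add: power2_eq_square mult_le_cancel_right1)
    also have "c' * x < 1" using x assms by (auto simp: field_simps)
    finally have "min (c' * x\<^sup>2) 1 = c' * x\<^sup>2" by simp
    moreover have "c * x\<^sup>2 < c' * x\<^sup>2" using assms x by simp
    ultimately have "0 < min (c' * x\<^sup>2) 1 - min (c * x\<^sup>2) 1" by linarith
    thus "0 < (min (c' * x\<^sup>2) 1 - min (c * x\<^sup>2) 1) * \<nu> x" using pos_near_0 x by auto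
  qed (use Bochner_Integration.integrable_diff[OF int(2,1)] \<eta>_pos assms in \<open>auto simp: left_diff_distrib\<close>)
  also have "\<dots> = hsq \<nu> c' - hsq \<nu> c"
    unfolding hsq_def using Bochner_Integration.integral_diff[OF int(2,1)] by (simp add: left_diff_distrib)
  finally show ?thesis by simp
qed

lemma hsq_scale_down:
  assumes "0 < c" "0 < \<kappa>" "\<kappa> \<le> 1"
  shows "hsq \<nu> (\<kappa> * c) \<le> 15 / Cl\<^sup>2 * \<kappa> powr (\<alpha>/2) * hsq \<nu> c"
proof -
  define u \<xi> where "u = sqrt \<kappa>" and "\<xi> = sqrt c"
  have u: "0 < u" "u \<le> 1" and \<xi>: "0 < \<xi>" using assms by (auto simp: u_def \<xi>_def)
  have "hsq \<nu> (\<kappa> * c) = hsq \<nu> ((u * \<xi>)\<^sup>2)" using assms by (simp add: u_def \<xi>_def power_mult_distrib)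
  also have "\<dots> \<le> 15/(2*Cl) * psi \<nu> (u * \<xi>)" using hsq_le_psi u \<xi> by simp
  also have "\<dots> \<le> 15/(2*Cl) * (u powr \<alpha> * psi \<nu> \<xi> / Cl)"
    using psi_scale_down[of \<xi> u] u \<xi> Cl_pos by (intro mult_left_mono) (auto simp: field_simps)
  also have "\<dots> \<le> 15/(2*Cl) * (u powr \<alpha> * (2 * hsq \<nu> c) / Cl)"
    using psi_le_hsq[of \<xi>] assms Cl_pos by (intro mult_left_mono divide_right_mono) (auto simp: \<xi>_def)
  also have "\<dots> = 15 / Cl\<^sup>2 * u powr \<alpha> * hsq \<nu> c" using Cl_pos by (simp add: power2_eq_square)
  also have "u powr \<alpha> = \<kappa> powr (\<alpha>/2)" using assms by (simp add: u_def sqrt_powr)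
  finally show ?thesis .
qed

lemma hsq_le_powr:
  assumes "1 \<le> c"
  shows "hsq \<nu> c \<le> 15/(2*Cl) * Cu * psi \<nu> 1 * c powr (\<beta>/2)"
proof -
  have "hsq \<nu> c \<le> 15/(2*Cl) * psi \<nu> (sqrt c)" using hsq_le_psi[of "sqrt c"] assms by simp
  also have "\<dots> \<le> 15/(2*Cl) * (Cu * sqrt c powr \<beta> * psi \<nu> 1)"
    using psi_upper_scaling[of "sqrt c" 1] assms Cl_pos by (intro mult_left_mono) auto
  finally show ?thesis using assms by (simp add: sqrt_powr mult_ac)
qed

lemma hsq_ge_powr:
  assumes "1 \<le> c"
  shows "Cl * psi \<nu> 1 / 2 * c powr (\<alpha>/2) \<le> hsq \<nu> c"
proof -
  have "Cl * sqrt c powr \<alpha> * psi \<nu> 1 \<le> psi \<nu> (sqrt c)"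
    using psi_lower_scaling[of "sqrt c" 1] assms by simp
  also have "\<dots> \<le> 2 * hsq \<nu> c" using psi_le_hsq[of "sqrt c"] assms by simp
  finally show ?thesis using assms by (simp add: sqrt_powr mult_ac)
qed

lemma hsq_surj:
  assumes "0 < y"
  obtains c where "0 < c" "hsq \<nu> c = y"
proof -
  define b where "b = Cl * psi \<nu> 1 / 2"
  have b: "0 < b" using Cl_pos psi_one_pos by (simp add: b_def)
  define c1 where "c1 = max 1 ((y/b) powr (2/\<alpha>))"
  have "y = b * ((y/b) powr (2/\<alpha>)) powr (\<alpha>/2)"
    using assms b exponents by (simp add: powr_powr)
  also have "\<dots> \<le> b * c1 powr (\<alpha>/2)"
    using b exponents by (intro mult_left_mono powr_mono2) (auto simp: c1_def)
  also have "\<dots> \<le> hsq \<nu> c1" using hsq_ge_powr[of c1] by (simp add: b_def c1_def)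
  finally have upper: "y \<le> hsq \<nu> c1" .
  define M where "M = 15 / Cl\<^sup>2 * (hsq \<nu> 1 + 1)"
  have M: "0 < M" using hsq_nonneg[of 1] Cl_pos by (simp add: M_def)
  define c0 where "c0 = min 1 ((y/M) powr (2/\<alpha>))"
  have c0: "0 < c0" "c0 \<le> 1" using assms M by (auto simp: c0_def)
  have "hsq \<nu> c0 \<le> 15 / Cl\<^sup>2 * c0 powr (\<alpha>/2) * hsq \<nu> 1"
    using hsq_scale_down[of 1 c0] c0 by simp
  also have "\<dots> \<le> 15 / Cl\<^sup>2 * c0 powr (\<alpha>/2) * (hsq \<nu> 1 + 1)"
    by (intro mult_left_mono) auto
  also have "\<dots> = M * c0 powr (\<alpha>/2)" by (simp add: M_def)
  also have "\<dots> \<le> M * ((y/M) powr (2/\<alpha>)) powr (\<alpha>/2)"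
    using M c0 exponents by (intro mult_left_mono powr_mono2) (auto simp: c0_def)
  also have "\<dots> = y" using assms M exponents by (simp add: powr_powr)
  finally have lower: "hsq \<nu> c0 \<le> y" .
  have "c0 \<le> c1" using c0 by (simp add: c1_def)
  moreover have "continuous_on {c0..c1} (hsq \<nu>)"
    by (rule continuous_on_subset[OF continuous_on_hsq]) (use c0 in auto)
  ultimately obtain c where "c0 \<le> c" "hsq \<nu> c = y"
    using IVT'[of "hsq \<nu>" c0 y c1] lower upper by auto
  thus ?thesis using c0 by (intro that[of c]) auto
qed

lemma hsq_hinv:
  assumes "0 < y"
  shows "0 < hinv \<nu> y \<and> hsq \<nu> (1/(hinv \<nu> y)\<^sup>2) = y"
proof -
  obtain c where c: "0 < c" "hsq \<nu> c = y" using hsq_surj[OF assms] .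
  have "\<exists>!r. 0 < r \<and> hfun \<nu> r = y"
  proof (rule ex1I[of _ "1/sqrt c"])
    show "0 < 1/sqrt c \<and> hfun \<nu> (1/sqrt c) = y" using c by (simp add: hfun_eq_hsq power_divide)
    fix r assume r: "0 < r \<and> hfun \<nu> r = y"
    hence "hsq \<nu> (1/r\<^sup>2) = hsq \<nu> c" using c hfun_eq_hsq by metis
    hence "1/r\<^sup>2 = c"
      using hsq_strict_mono[of "1/r\<^sup>2" c] hsq_strict_mono[of c "1/r\<^sup>2"] c
      by (cases "1/r\<^sup>2" c rule: linorder_cases) auto
    hence "r\<^sup>2 = 1/c" using r c by (simp add: field_simps)
    hence "r = sqrt (1/c)" using r by (metis less_imp_le real_sqrt_unique)
    thus "r = 1/sqrt c" by (simp add: real_sqrt_divide)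
  qed
  hence "0 < hinv \<nu> y \<and> hfun \<nu> (hinv \<nu> y) = y" unfolding hinv_def by (rule theI')
  thus ?thesis by (auto simp: hfun_eq_hsq)
qed

lemma hinv_ge:
  assumes "0 < t" "t \<le> \<tau>" "\<tau> powr (1/\<alpha>) \<le> G" "(Cl * psi \<nu> 1 / 2) powr (-1/\<alpha>) \<le> G"
  shows "t powr (1/\<alpha>) / G \<le> hinv \<nu> (1/t)"
proof -
  define r b where "r = hinv \<nu> (1/t)" and "b = Cl * psi \<nu> 1 / 2"
  have r: "0 < r" "hsq \<nu> (1/r\<^sup>2) = 1/t" using hsq_hinv[of "1/t"] assms by (simp_all add: r_def)
  have b: "0 < b" using Cl_pos psi_one_pos by (simp add: b_def)
  have "0 < b powr (-1/\<alpha>)" using b by simp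
  hence G: "0 < G" using assms(4) unfolding b_def by linarith
  show ?thesis
  proof (cases "r \<le> 1")
    case True
    have "b * (1/r\<^sup>2) powr (\<alpha>/2) \<le> 1/t"
      using hsq_ge_powr[of "1/r\<^sup>2"] r True by (simp add: b_def power_le_one)
    hence "b / r powr \<alpha> \<le> 1/t" using r by (simp add: inverse_sq_powr)
    hence "b * t \<le> r powr \<alpha>" using r assms by (simp add: field_simps)
    hence "(b * t) powr (1/\<alpha>) \<le> (r powr \<alpha>) powr (1/\<alpha>)"
      using b assms exponents by (intro powr_mono2) auto
    hence "b powr (1/\<alpha>) * t powr (1/\<alpha>) \<le> r" using r exponents by (simp add: powr_powr powr_mult)
    moreover have "1/G \<le> b powr (1/\<alpha>)"
    proof -
      have "1 / b powr (1/\<alpha>) \<le> G" using assms(4) by (simp add: b_def powr_minus_divide)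
      thus ?thesis using b G by (simp add: divide_simps mult.commute)
    qed
    hence "t powr (1/\<alpha>) * (1/G) \<le> t powr (1/\<alpha>) * b powr (1/\<alpha>)" by (rule mult_left_mono) simp
    ultimately show ?thesis by (simp add: r_def mult.commute)
  next
    case False
    have "t powr (1/\<alpha>) \<le> \<tau> powr (1/\<alpha>)" using assms exponents by (intro powr_mono2) auto
    hence "t powr (1/\<alpha>) / G \<le> 1" using assms G by simp
    thus ?thesis using False by (simp add: r_def)
  qed
qed

lemma hinv_le:
  assumes "0 < t" "hinv \<nu> (1/t) \<le> 1" "(15/(2*Cl) * Cu * psi \<nu> 1) powr (1/\<beta>) \<le> G"
  shows "hinv \<nu> (1/t) \<le> G * t powr (1/\<beta>)"
proof -
  define r B where "r = hinv \<nu> (1/t)" and "B = 15/(2*Cl) * Cu * psi \<nu> 1"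
  have r: "0 < r" "hsq \<nu> (1/r\<^sup>2) = 1/t" using hsq_hinv[of "1/t"] assms by (simp_all add: r_def)
  have "1/t \<le> B * (1/r\<^sup>2) powr (\<beta>/2)"
    using hsq_le_powr[of "1/r\<^sup>2"] r assms by (simp add: B_def r_def power_le_one)
  hence "1/t \<le> B / r powr \<beta>" using r by (simp add: inverse_sq_powr)
  hence "r powr \<beta> \<le> B * t" using r assms by (simp add: field_simps)
  hence "(r powr \<beta>) powr (1/\<beta>) \<le> (B * t) powr (1/\<beta>)"
    using r exponents by (intro powr_mono2) auto
  moreover have "0 < B" using psi_one_pos Cl_pos Cu_pos by (simp add: B_def)
  ultimately have "r \<le> B powr (1/\<beta>) * t powr (1/\<beta>)"
    using r exponents assms by (simp add: powr_powr powr_mult)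
  also have "\<dots> \<le> G * t powr (1/\<beta>)" using assms by (intro mult_right_mono) (auto simp: B_def)
  finally show ?thesis by (simp add: r_def)
qed

lemma time_ge_if_hinv_gt_half:
  assumes "0 < t" "1/2 < hinv \<nu> (1/t)" "hsq \<nu> 4 \<le> G"
  shows "1/G \<le> t"
proof -
  define r where "r = hinv \<nu> (1/t)"
  have r: "0 < r" "hsq \<nu> (1/r\<^sup>2) = 1/t" using hsq_hinv[of "1/t"] assms by (simp_all add: r_def)
  have "(1/2)\<^sup>2 \<le> r\<^sup>2" using assms by (intro power_mono) (auto simp: r_def)
  hence "1/r\<^sup>2 \<le> 4" using r by (simp add: field_simps)
  hence "1/t \<le> G" using hsq_mono[of "1/r\<^sup>2" 4] r assms by simp
  moreover have "0 < hsq \<nu> 4" using hsq_strict_mono[of 0 4] hsq_nonneg[of 0] by simp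
  ultimately show ?thesis using assms by (simp add: field_simps)
qed

lemma hsq_trunc_le_powr:
  assumes "R \<le> 1" "0 \<le> c" "hsq \<nu> 1 \<le> G" "15/(2*Cl) * Cu * psi \<nu> 1 \<le> G"
  shows "hsq_trunc \<nu> R c \<le> G * c powr (\<beta>/2)"
proof (cases "1 \<le> c")
  case True
  have "hsq_trunc \<nu> R c \<le> hsq \<nu> c" using hsq_trunc_le_hsq assms by simp
  also have "\<dots> \<le> 15/(2*Cl) * Cu * psi \<nu> 1 * c powr (\<beta>/2)" using hsq_le_powr[OF True] .
  also have "\<dots> \<le> G * c powr (\<beta>/2)" using assms by (intro mult_right_mono) auto
  finally show ?thesis .
next
  case False
  have "c \<le> c powr (\<beta>/2)"
    using powr_mono'[of "\<beta>/2" 1 c] assms False exponents by simp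
  hence "c * hsq \<nu> 1 \<le> c powr (\<beta>/2) * G"
    using assms hsq_nonneg[of 1] by (intro mult_mono) auto
  thus ?thesis using hsq_trunc_le_linear[of c R] assms by (simp add: mult.commute)
qed

end

section \<open>Estimates with a uniform constant\<close>

(* The consequences of the standing assumptions that the estimates below use, all with one
   constant G; they hold for every large G, so a single G serves all indices at once. *)
locale scaling_bounds = levy_density +
  fixes \<alpha> \<beta> \<tau> R G :: real
  assumes exponents: "0 < \<alpha>" "\<alpha> \<le> \<beta>" "\<beta> < 2" and G_ge_1: "1 \<le> G"
    and hsq_hinv: "\<And>t. 0 < t \<Longrightarrow> 0 < hinv \<nu> (1/t) \<and> hsq \<nu> (1/(hinv \<nu> (1/t))\<^sup>2) = 1/t"
    and hinv_ge: "\<And>t. 0 < t \<Longrightarrow> t \<le> \<tau> \<Longrightarrow> t powr (1/\<alpha>) / G \<le> hinv \<nu> (1/t)"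
    and hinv_le: "\<And>t. 0 < t \<Longrightarrow> hinv \<nu> (1/t) \<le> 1 \<Longrightarrow> hinv \<nu> (1/t) \<le> G * t powr (1/\<beta>)"
    and time_ge_if_hinv_gt_half: "\<And>t. 0 < t \<Longrightarrow> 1/2 < hinv \<nu> (1/t) \<Longrightarrow> 1/G \<le> t"
    and hsq_scale_down:
      "\<And>c \<kappa>. 0 < c \<Longrightarrow> 0 < \<kappa> \<Longrightarrow> \<kappa> \<le> 1 \<Longrightarrow> hsq \<nu> (\<kappa> * c) \<le> G * \<kappa> powr (\<alpha>/2) * hsq \<nu> c"
    and hsq_trunc_le_powr: "\<And>c. 0 \<le> c \<Longrightarrow> hsq_trunc \<nu> R c \<le> G * c powr (\<beta>/2)"
    and hsq_trunc_le_linear: "\<And>c. 0 \<le> c \<Longrightarrow> hsq_trunc \<nu> R c \<le> G * c"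

lemma (in scaling_levy_density) eventually_scaling_bounds:
  assumes "R \<le> 1"
  shows "eventually (scaling_bounds \<nu> \<alpha> \<beta> \<tau> R) at_top"
  using eventually_ge_at_top[of 1] eventually_ge_at_top[of "\<tau> powr (1/\<alpha>)"]
    eventually_ge_at_top[of "(Cl * psi \<nu> 1 / 2) powr (-1/\<alpha>)"]
    eventually_ge_at_top[of "(15/(2*Cl) * Cu * psi \<nu> 1) powr (1/\<beta>)"]
    eventually_ge_at_top[of "15/(2*Cl) * Cu * psi \<nu> 1"]
    eventually_ge_at_top[of "hsq \<nu> 4"] eventually_ge_at_top[of "15/Cl\<^sup>2"] eventually_ge_at_top[of "hsq \<nu> 1"]
proof eventually_elim
  case (elim G)
  show ?case
  proof (intro scaling_bounds.intro[OF levy_density_axioms] scaling_bounds_axioms.intro)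
    show "hsq \<nu> (\<kappa> * c) \<le> G * \<kappa> powr (\<alpha>/2) * hsq \<nu> c" if "0 < c" "0 < \<kappa>" "\<kappa> \<le> 1" for c \<kappa>
    proof -
      have "hsq \<nu> (\<kappa> * c) \<le> 15 / Cl\<^sup>2 * \<kappa> powr (\<alpha>/2) * hsq \<nu> c" using hsq_scale_down that .
      also have "\<dots> \<le> G * \<kappa> powr (\<alpha>/2) * hsq \<nu> c"
        using elim hsq_nonneg[of c] that by (intro mult_right_mono) auto
      finally show ?thesis .
    qed
    show "hsq_trunc \<nu> R c \<le> G * c" if "0 \<le> c" for c
    proof -
      have "hsq_trunc \<nu> R c \<le> c * hsq \<nu> 1" using hsq_trunc_le_linear that assms .
      also have "\<dots> \<le> c * G" using elim that by (intro mult_left_mono) auto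
      finally show ?thesis by (simp add: mult.commute)
    qed
  qed (use elim assms exponents hsq_hinv hinv_ge hinv_le time_ge_if_hinv_gt_half hsq_trunc_le_powr in auto)
qed

context scaling_bounds
begin

lemma G_le_G_sq_mult:
  assumes "0 \<le> \<tau>"
  shows "G \<le> G\<^sup>2 * (1 + 4*\<tau>)"
proof -
  have "G * 1 \<le> G\<^sup>2 * (1 + 4*\<tau>)"
    using power_increasing[of 1 2 G] G_ge_1 assms by (intro mult_mono) auto
  thus ?thesis by simp
qed

lemma hsq_trunc_mult_hinv_le:
  assumes "0 < t" "0 \<le> \<kappa>"
  shows "hsq_trunc \<nu> R (\<kappa> / (hinv \<nu> (1/t))\<^sup>2) \<le> (G * \<kappa> powr (\<alpha>/2) + \<kappa>) / t"
proof -
  define c where "c = 1/(hinv \<nu> (1/t))\<^sup>2"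
  have c: "0 < c" "hsq \<nu> c = 1/t" using hsq_hinv[OF assms(1)] by (simp_all add: c_def)
  have "hsq_trunc \<nu> R (\<kappa> / (hinv \<nu> (1/t))\<^sup>2) \<le> hsq \<nu> (\<kappa> * c)"
    using hsq_trunc_le_hsq c assms by (simp add: c_def)
  also have "\<dots> \<le> (G * \<kappa> powr (\<alpha>/2) + \<kappa>) * hsq \<nu> c"
  proof -
    consider "\<kappa> = 0" | "0 < \<kappa>" "\<kappa> \<le> 1" | "1 < \<kappa>" using assms by linarith
    thus ?thesis
    proof cases
      case 1
      thus ?thesis by (simp add: hsq_zero)
    next
      case 2
      hence "hsq \<nu> (\<kappa> * c) \<le> G * \<kappa> powr (\<alpha>/2) * hsq \<nu> c" using hsq_scale_down c(1) by simp
      thus ?thesis using hsq_nonneg[of c] c(1) assms by (simp add: distrib_right add_increasing2)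
    next
      case 3
      hence "hsq \<nu> (\<kappa> * c) \<le> \<kappa> * hsq \<nu> c" using hsq_mult_le c(1) by simp
      thus ?thesis using hsq_nonneg[of c] c(1) G_ge_1 by (simp add: distrib_right add_increasing)
    qed
  qed
  finally show ?thesis using c by simp
qed

lemma hsq_trunc_powr_hinv_le_small:
  assumes "0 < t" "r = hinv \<nu> (1/t)" "r \<le> 1/2" "0 \<le> \<theta>" "\<theta> \<le> 1" "1 \<le> A" "A \<le> 2 powr \<theta>"
  shows "hsq_trunc \<nu> R (A * r powr \<theta> / r\<^sup>2) \<le> A * G\<^sup>2 * t powr (\<theta>*\<alpha>/(2*\<beta>)) / t"
proof -
  have r: "0 < r" "hsq \<nu> (1/r\<^sup>2) = 1/t" using hsq_hinv[OF assms(1)] assms(2) by simp_all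
  define \<rho> where "\<rho> = A * r powr \<theta>"
  have "\<rho> \<le> 2 powr \<theta> * (1/2) powr \<theta>"
    unfolding \<rho>_def using assms r by (intro mult_mono powr_mono2) auto
  hence \<rho>: "0 < \<rho>" "\<rho> \<le> 1" using r assms by (simp_all add: \<rho>_def powr_mult[symmetric])
  have \<rho>_powr: "\<rho> powr (\<alpha>/2) \<le> A * G * t powr (\<theta>*\<alpha>/(2*\<beta>))"
  proof -
    have "A powr (\<alpha>/2) \<le> A" using powr_mono[of "\<alpha>/2" 1 A] assms exponents by simp
    moreover have "r powr (\<theta>*\<alpha>/2) \<le> (G * t powr (1/\<beta>)) powr (\<theta>*\<alpha>/2)"
      using hinv_le[OF assms(1)] assms r exponents by (intro powr_mono2) auto
    moreover have "(G * t powr (1/\<beta>)) powr (\<theta>*\<alpha>/2) \<le> G * t powr (\<theta>*\<alpha>/(2*\<beta>))"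
    proof -
      have "\<theta>*\<alpha> \<le> 1*2" using assms exponents by (intro mult_mono) auto
      hence "G powr (\<theta>*\<alpha>/2) \<le> G" using powr_mono[of "\<theta>*\<alpha>/2" 1 G] G_ge_1 by simp
      moreover have "(G * t powr (1/\<beta>)) powr (\<theta>*\<alpha>/2) = G powr (\<theta>*\<alpha>/2) * t powr (\<theta>*\<alpha>/(2*\<beta>))"
        by (simp add: powr_mult powr_powr ac_simps)
      ultimately show ?thesis by (simp add: mult_right_mono)
    qed
    ultimately have "A powr (\<alpha>/2) * r powr (\<theta>*\<alpha>/2) \<le> A * (G * t powr (\<theta>*\<alpha>/(2*\<beta>)))"
      using assms by (intro mult_mono) auto
    thus ?thesis by (simp add: \<rho>_def powr_mult powr_powr)
  qed
  have "hsq_trunc \<nu> R (\<rho> / r\<^sup>2) \<le> hsq \<nu> (\<rho> * (1/r\<^sup>2))" using hsq_trunc_le_hsq \<rho> by simp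
  also have "\<dots> \<le> G * \<rho> powr (\<alpha>/2) * (1/t)" using hsq_scale_down[of "1/r\<^sup>2" \<rho>] \<rho> r by simp
  also have "\<dots> \<le> G * (A * G * t powr (\<theta>*\<alpha>/(2*\<beta>))) * (1/t)"
    using \<rho>_powr G_ge_1 assms by (intro mult_right_mono mult_left_mono) auto
  finally show ?thesis by (simp add: \<rho>_def power2_eq_square mult_ac)
qed

lemma hsq_trunc_powr_hinv_le_large:
  assumes "0 < t" "t \<le> \<tau>" "r = hinv \<nu> (1/t)" "1/2 < r" "0 \<le> \<theta>" "\<theta> \<le> 1" "0 \<le> A"
  shows "hsq_trunc \<nu> R (A * r powr \<theta> / r\<^sup>2) \<le> 4 * A * G\<^sup>2 * \<tau> * t powr (\<theta>*\<alpha>/(2*\<beta>)) / t"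
proof -
  have r: "0 < r" using assms by simp
  have "r powr \<theta> / r\<^sup>2 = r powr (\<theta> - 2)" using r by (simp add: powr_diff powr_numeral)
  also have "\<dots> \<le> (1/2) powr (\<theta> - 2)" using assms by (intro powr_mono2') auto
  also have "\<dots> = 2 powr (2 - \<theta>)" by (simp add: powr_divide powr_minus_divide[symmetric])
  also have "\<dots> \<le> 2 powr 2" using assms by (intro powr_mono) auto
  finally have "A * (r powr \<theta> / r\<^sup>2) \<le> A * 4" using assms by (intro mult_left_mono) auto
  hence "G * (A * r powr \<theta> / r\<^sup>2) \<le> G * (A * 4)" using G_ge_1 by (intro mult_left_mono) auto
  hence "hsq_trunc \<nu> R (A * r powr \<theta> / r\<^sup>2) \<le> G * (A * 4)"
    using hsq_trunc_le_linear[of "A * r powr \<theta> / r\<^sup>2"] assms by simp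
  also have "\<dots> = 4 * A * G\<^sup>2 * (1/G)" using G_ge_1 by (simp add: power2_eq_square)
  also have "\<dots> \<le> 4 * A * G\<^sup>2 * t powr (\<theta>*\<alpha>/(2*\<beta>))"
  proof (intro mult_left_mono inverse_le_powr_if_inverse_le)
    have "\<theta> * \<alpha> \<le> 1 * (2*\<beta>)" using assms exponents by (intro mult_mono) auto
    thus "\<theta>*\<alpha>/(2*\<beta>) \<le> 1" using exponents by simp
    show "1/G \<le> t" using time_ge_if_hinv_gt_half assms by simp
  qed (use assms exponents G_ge_1 in auto)
  also have "\<dots> \<le> 4 * A * G\<^sup>2 * t powr (\<theta>*\<alpha>/(2*\<beta>)) * (\<tau> / t)"
  proof -
    have "1 \<le> \<tau> / t" using assms by simp
    thus ?thesis using assms by (metis mult.right_neutral mult_left_mono mult_nonneg_nonneg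
        powr_ge_zero zero_le_numeral zero_le_power2)
  qed
  finally show ?thesis by (simp add: mult_ac)
qed

lemma hsq_trunc_powr_hinv_le:
  assumes "0 < t" "t \<le> \<tau>" "r = hinv \<nu> (1/t)" "0 \<le> \<theta>" "\<theta> \<le> 1" "1 \<le> A" "A \<le> 2 powr \<theta>"
  shows "hsq_trunc \<nu> R (A * r powr \<theta> / r\<^sup>2) \<le> A * G\<^sup>2 * (1 + 4*\<tau>) * t powr (\<theta>*\<alpha>/(2*\<beta>)) / t"
proof -
  have nonneg: "0 \<le> A * G\<^sup>2 * t powr (\<theta>*\<alpha>/(2*\<beta>))" using assms by simp
  show ?thesis
  proof (cases "r \<le> 1/2")
    case True
    have "hsq_trunc \<nu> R (A * r powr \<theta> / r\<^sup>2) \<le> A * G\<^sup>2 * t powr (\<theta>*\<alpha>/(2*\<beta>)) / t"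
      using hsq_trunc_powr_hinv_le_small True assms by simp
    also have "\<dots> = A * G\<^sup>2 * t powr (\<theta>*\<alpha>/(2*\<beta>)) * 1 / t" by simp
    also have "\<dots> \<le> A * G\<^sup>2 * t powr (\<theta>*\<alpha>/(2*\<beta>)) * (1 + 4*\<tau>) / t"
      using nonneg assms by (intro divide_right_mono mult_left_mono) auto
    finally show ?thesis by (simp add: mult_ac)
  next
    case False
    have "hsq_trunc \<nu> R (A * r powr \<theta> / r\<^sup>2) \<le> 4 * A * G\<^sup>2 * \<tau> * t powr (\<theta>*\<alpha>/(2*\<beta>)) / t"
      using hsq_trunc_powr_hinv_le_large False assms by simp
    also have "\<dots> = A * G\<^sup>2 * t powr (\<theta>*\<alpha>/(2*\<beta>)) * (4*\<tau>) / t" by (simp add: mult_ac)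
    also have "\<dots> \<le> A * G\<^sup>2 * t powr (\<theta>*\<alpha>/(2*\<beta>)) * (1 + 4*\<tau>) / t"
      using nonneg assms by (intro divide_right_mono mult_left_mono) auto
    finally show ?thesis by (simp add: mult_ac)
  qed
qed

lemma hsq_trunc_powr_le:
  assumes "0 < t" "0 \<le> b" "0 \<le> \<theta>" "\<theta> \<le> 1" "0 \<le> x" "x \<le> G\<^sup>2 * t powr (-2/\<alpha>)"
  shows "hsq_trunc \<nu> R (b * x powr \<theta>) \<le> G^3 * b powr (\<beta>/2) * t powr (-\<theta>*\<beta>/\<alpha>)"
proof -
  have "\<theta> * \<beta> \<le> 1 * 2" using assms exponents by (intro mult_mono) auto
  hence "(G\<^sup>2) powr (\<theta>*\<beta>/2) \<le> (G\<^sup>2) powr 1"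
    using G_ge_1 by (intro powr_mono) (auto simp: one_le_power)
  hence G_powr: "(G\<^sup>2) powr (\<theta>*\<beta>/2) \<le> G\<^sup>2" by simp
  have t_powr: "(t powr (-2/\<alpha>)) powr (\<theta>*\<beta>/2) = t powr (-\<theta>*\<beta>/\<alpha>)"
    unfolding powr_powr using exponents by (simp add: field_simps)
  have "x powr (\<theta>*\<beta>/2) \<le> (G\<^sup>2 * t powr (-2/\<alpha>)) powr (\<theta>*\<beta>/2)"
    using assms exponents by (intro powr_mono2) auto
  also have "\<dots> = (G\<^sup>2) powr (\<theta>*\<beta>/2) * t powr (-\<theta>*\<beta>/\<alpha>)" by (simp only: powr_mult t_powr)
  also have "\<dots> \<le> G\<^sup>2 * t powr (-\<theta>*\<beta>/\<alpha>)" using G_powr by (intro mult_right_mono) auto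
  finally have x: "x powr (\<theta>*\<beta>/2) \<le> G\<^sup>2 * t powr (-\<theta>*\<beta>/\<alpha>)" .
  have "hsq_trunc \<nu> R (b * x powr \<theta>) \<le> G * (b * x powr \<theta>) powr (\<beta>/2)"
    using hsq_trunc_le_powr assms by simp
  also have "\<dots> = G * (b powr (\<beta>/2) * x powr (\<theta>*\<beta>/2))"
    unfolding powr_mult powr_powr by (simp add: mult.commute)
  also have "\<dots> \<le> G * (b powr (\<beta>/2) * (G\<^sup>2 * t powr (-\<theta>*\<beta>/\<alpha>)))"
    using x G_ge_1 by (intro mult_left_mono) auto
  also have "\<dots> = G^3 * b powr (\<beta>/2) * t powr (-\<theta>*\<beta>/\<alpha>)"
    by (simp add: power2_eq_square power3_eq_cube)
  finally show ?thesis .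
qed

lemma integral_min_square_le:
  assumes "0 < t" "t \<le> \<tau>" and dominated: "\<And>w. w \<noteq> 0 \<Longrightarrow> \<mu> w \<le> \<nu> w * indicator {x. \<bar>x\<bar> < R} w"
  shows "(LINT w|lborel. min (((\<bar>a\<bar> + \<bar>w\<bar>)\<^sup>2 * \<bar>w\<bar>\<^sup>2) / (hinv \<nu> (1/t))\<^sup>2) 1 * \<mu> w)
    \<le> 2 * G\<^sup>2 * (1 + 4*\<tau>) * (t powr (\<alpha>/(2*\<beta>)) + \<bar>a\<bar> powr \<alpha> + \<bar>a\<bar>\<^sup>2) / t"
proof -
  define r where "r = hinv \<nu> (1/t)"
  have r: "0 < r" using hsq_hinv assms(1) by (simp add: r_def)
  have "(LINT w|lborel. min (((\<bar>a\<bar> + \<bar>w\<bar>)\<^sup>2 * \<bar>w\<bar>\<^sup>2) / r\<^sup>2) 1 * \<mu> w)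
      \<le> hsq_trunc \<nu> R (2*a\<^sup>2/r\<^sup>2) + hsq_trunc \<nu> R (sqrt (2/r\<^sup>2))"
    using r by (intro integral_min_split_le[OF dominated] min_split_square) auto
  moreover have "hsq_trunc \<nu> R (2*a\<^sup>2/r\<^sup>2) \<le> (2*G * \<bar>a\<bar> powr \<alpha> + 2 * \<bar>a\<bar>\<^sup>2) / t"
  proof -
    have "hsq_trunc \<nu> R (2*a\<^sup>2/r\<^sup>2) \<le> (G * (2*a\<^sup>2) powr (\<alpha>/2) + 2*a\<^sup>2) / t"
      using hsq_trunc_mult_hinv_le[OF assms(1), of "2*a\<^sup>2"] by (simp add: r_def)
    also have "\<dots> \<le> (G * (2 * \<bar>a\<bar> powr \<alpha>) + 2*a\<^sup>2) / t"
      using powr_two_mult_sq_le[of "\<alpha>/2" a] exponents G_ge_1 assms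
      by (intro divide_right_mono add_right_mono mult_left_mono) auto
    finally show ?thesis by (simp add: ac_simps)
  qed
  moreover have "hsq_trunc \<nu> R (sqrt (2/r\<^sup>2)) \<le> sqrt 2 * G\<^sup>2 * (1 + 4*\<tau>) * t powr (\<alpha>/(2*\<beta>)) / t"
  proof -
    have "sqrt (2/r\<^sup>2) = sqrt 2 * r powr 1 / r\<^sup>2" using r by (simp add: real_sqrt_divide power2_eq_square)
    thus ?thesis using hsq_trunc_powr_hinv_le[of t r 1 "sqrt 2"] sqrt2_less_2 assms by (simp add: r_def)
  qed
  ultimately have "(LINT w|lborel. min (((\<bar>a\<bar> + \<bar>w\<bar>)\<^sup>2 * \<bar>w\<bar>\<^sup>2) / r\<^sup>2) 1 * \<mu> w)
      \<le> (sqrt 2 * G\<^sup>2 * (1 + 4*\<tau>) * t powr (\<alpha>/(2*\<beta>)) + 2*G * \<bar>a\<bar> powr \<alpha> + 2 * \<bar>a\<bar>\<^sup>2) / t"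
    by (simp add: add_divide_distrib)
  also have "\<dots> \<le> 2 * G\<^sup>2 * (1 + 4*\<tau>) * (t powr (\<alpha>/(2*\<beta>)) + \<bar>a\<bar> powr \<alpha> + \<bar>a\<bar>\<^sup>2) / t"
  proof (intro divide_right_mono weighted_sum_le)
    have "G \<le> G\<^sup>2 * (1 + 4*\<tau>)" using G_le_G_sq_mult assms by simp
    thus "2*G \<le> 2 * G\<^sup>2 * (1 + 4*\<tau>)" "2 \<le> 2 * G\<^sup>2 * (1 + 4*\<tau>)" using G_ge_1 by auto
    show "sqrt 2 * G\<^sup>2 * (1 + 4*\<tau>) \<le> 2 * G\<^sup>2 * (1 + 4*\<tau>)"
      using sqrt2_less_2 assms by (intro mult_right_mono) auto
  qed (use assms in auto)
  finally show ?thesis by (simp add: r_def)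
qed

lemma integral_min_cube_le:
  assumes "0 < t" "t \<le> \<tau>" and dominated: "\<And>w. w \<noteq> 0 \<Longrightarrow> \<mu> w \<le> \<nu> w * indicator {x. \<bar>x\<bar> < R} w"
  shows "(LINT w|lborel. min (((\<bar>a\<bar> + \<bar>w\<bar>) * \<bar>w\<bar>\<^sup>2) / (hinv \<nu> (1/t))\<^sup>2) 1 * \<mu> w)
    \<le> G\<^sup>2 * (1 + 4*\<tau>) * (t powr (\<alpha>/(3*\<beta>)) + \<bar>a\<bar> powr (\<alpha>/2) + \<bar>a\<bar>) / t"
proof -
  define r where "r = hinv \<nu> (1/t)"
  have r: "0 < r" using hsq_hinv assms(1) by (simp add: r_def)
  have "(LINT w|lborel. min (((\<bar>a\<bar> + \<bar>w\<bar>) * \<bar>w\<bar>\<^sup>2) / r\<^sup>2) 1 * \<mu> w)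
      \<le> hsq_trunc \<nu> R (\<bar>a\<bar>/r\<^sup>2) + hsq_trunc \<nu> R ((1/r\<^sup>2) powr (2/3))"
    using r by (intro integral_min_split_le[OF dominated] min_split_cube) auto
  moreover have "hsq_trunc \<nu> R (\<bar>a\<bar>/r\<^sup>2) \<le> (G * \<bar>a\<bar> powr (\<alpha>/2) + \<bar>a\<bar>) / t"
    using hsq_trunc_mult_hinv_le[OF assms(1), of "\<bar>a\<bar>"] by (simp add: r_def)
  moreover have "hsq_trunc \<nu> R ((1/r\<^sup>2) powr (2/3)) \<le> G\<^sup>2 * (1 + 4*\<tau>) * t powr (\<alpha>/(3*\<beta>)) / t"
  proof -
    have "r powr (2/3 - 2) = r powr (2/3) / r powr 2" by (rule powr_diff)
    hence "1 * r powr (2/3) / r\<^sup>2 = r powr (2/3 - 2)" using r by simp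
    also have "\<dots> = (1/r\<^sup>2) powr (2/3)" using r by (simp add: inverse_sq_powr powr_minus_divide)
    finally have "(1/r\<^sup>2) powr (2/3) = 1 * r powr (2/3) / r\<^sup>2" ..
    moreover have "(2/3) * \<alpha> / (2*\<beta>) = \<alpha> / (3*\<beta>)" by simp
    ultimately show ?thesis
      using hsq_trunc_powr_hinv_le[of t r "2/3" 1] ge_one_powr_ge_zero[of 2 "2/3"] assms by (simp add: r_def)
  qed
  ultimately have "(LINT w|lborel. min (((\<bar>a\<bar> + \<bar>w\<bar>) * \<bar>w\<bar>\<^sup>2) / r\<^sup>2) 1 * \<mu> w)
      \<le> (G\<^sup>2 * (1 + 4*\<tau>) * t powr (\<alpha>/(3*\<beta>)) + G * \<bar>a\<bar> powr (\<alpha>/2) + 1 * \<bar>a\<bar>) / t"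
    by (simp add: add_divide_distrib)
  also have "\<dots> \<le> G\<^sup>2 * (1 + 4*\<tau>) * (t powr (\<alpha>/(3*\<beta>)) + \<bar>a\<bar> powr (\<alpha>/2) + \<bar>a\<bar>) / t"
  proof (intro divide_right_mono weighted_sum_le)
    have "G \<le> G\<^sup>2 * (1 + 4*\<tau>)" using G_le_G_sq_mult assms by simp
    thus "G \<le> G\<^sup>2 * (1 + 4*\<tau>)" "1 \<le> G\<^sup>2 * (1 + 4*\<tau>)" using G_ge_1 by auto
  qed (use assms in auto)
  finally show ?thesis by (simp add: r_def)
qed

lemma integral_min_square_mixed_le:
  assumes "0 < t" "0 < r1" "0 < r2" "t powr (1/\<alpha>) / G \<le> r1" "t powr (1/\<alpha>) / G \<le> r2"
    and dominated: "\<And>w. w \<noteq> 0 \<Longrightarrow> \<mu> w \<le> \<nu> w * indicator {x. \<bar>x\<bar> < R} w"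
  shows "(LINT w|lborel. min (((\<bar>a\<bar> + \<bar>w\<bar>)\<^sup>2 * \<bar>w\<bar>\<^sup>2) / (r1 * r2)) 1 * \<mu> w)
    \<le> 2 * G^3 * (\<bar>a\<bar> powr \<beta> * t powr (-\<beta>/\<alpha>) + t powr (-\<beta>/(2*\<alpha>)))"
proof -
  define x where "x = 1/(r1 * r2)"
  have x: "0 \<le> x" "x \<le> G\<^sup>2 * t powr (-2/\<alpha>)"
    using inverse_mult_le_if_powr_div_le[of r1 r2 G t \<alpha>] G_ge_1 assms by (simp_all add: x_def)
  have "(LINT w|lborel. min (((\<bar>a\<bar> + \<bar>w\<bar>)\<^sup>2 * \<bar>w\<bar>\<^sup>2) / (r1 * r2)) 1 * \<mu> w)
      \<le> hsq_trunc \<nu> R (2*a\<^sup>2 * x powr 1) + hsq_trunc \<nu> R (sqrt 2 * x powr (1/2))"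
    using assms integral_min_split_le[OF dominated _ _ min_split_square[of "r1 * r2" a]]
    by (simp add: x_def real_sqrt_divide powr_half_sqrt)
  also have "\<dots> \<le> G^3 * (2*a\<^sup>2) powr (\<beta>/2) * t powr (-\<beta>/\<alpha>) + G^3 * sqrt 2 powr (\<beta>/2) * t powr (-\<beta>/(2*\<alpha>))"
    using hsq_trunc_powr_le[of t "2*a\<^sup>2" 1 x] hsq_trunc_powr_le[of t "sqrt 2" "1/2" x] x assms
    by (intro add_mono) (simp_all add: mult.commute)
  also have "\<dots> \<le> G^3 * (2 * \<bar>a\<bar> powr \<beta>) * t powr (-\<beta>/\<alpha>) + G^3 * 2 * t powr (-\<beta>/(2*\<alpha>))"
  proof (intro add_mono mult_right_mono mult_left_mono)
    show "(2*a\<^sup>2) powr (\<beta>/2) \<le> 2 * \<bar>a\<bar> powr \<beta>" using powr_two_mult_sq_le[of "\<beta>/2" a] exponents by simp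
    have "sqrt 2 powr (\<beta>/2) \<le> sqrt 2 powr 1" using exponents by (intro powr_mono) auto
    thus "sqrt 2 powr (\<beta>/2) \<le> 2" using sqrt2_less_2 by simp
  qed (use G_ge_1 in auto)
  finally show ?thesis by (simp add: algebra_simps)
qed

lemma integral_min_cube_mixed_le:
  assumes "0 < t" "0 < r" "t powr (1/\<alpha>) / G \<le> r"
    and dominated: "\<And>w. w \<noteq> 0 \<Longrightarrow> \<mu> w \<le> \<nu> w * indicator {x. \<bar>x\<bar> < R} w"
  shows "(LINT w|lborel. min (((\<bar>a\<bar> + \<bar>w\<bar>) * \<bar>w\<bar>\<^sup>2) / r\<^sup>2) 1 * \<mu> w)
    \<le> G^3 * (\<bar>a\<bar> powr (\<beta>/2) * t powr (-\<beta>/\<alpha>) + t powr (-2*\<beta>/(3*\<alpha>)))"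
proof -
  define x where "x = 1/r\<^sup>2"
  have x: "0 \<le> x" "x \<le> G\<^sup>2 * t powr (-2/\<alpha>)"
    using inverse_mult_le_if_powr_div_le[of r r G t \<alpha>] G_ge_1 assms by (simp_all add: x_def power2_eq_square)
  have "(LINT w|lborel. min (((\<bar>a\<bar> + \<bar>w\<bar>) * \<bar>w\<bar>\<^sup>2) / r\<^sup>2) 1 * \<mu> w)
      \<le> hsq_trunc \<nu> R (\<bar>a\<bar> * x powr 1) + hsq_trunc \<nu> R (1 * x powr (2/3))"
    using assms integral_min_split_le[OF dominated _ _ min_split_cube[of "r\<^sup>2" a]]
    by (simp add: x_def)
  also have "\<dots> \<le> G^3 * \<bar>a\<bar> powr (\<beta>/2) * t powr (-\<beta>/\<alpha>) + G^3 * t powr (-2*\<beta>/(3*\<alpha>))"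
    using hsq_trunc_powr_le[of t "\<bar>a\<bar>" 1 x] hsq_trunc_powr_le[of t 1 "2/3" x] x assms
    by (intro add_mono) (simp_all add: mult.commute)
  finally show ?thesis by (simp add: algebra_simps)
qed

end

lemma levy_assms_scaling_levy_density:
  assumes levy: "levy_assms d \<nu> \<eta>4 \<alpha> \<beta> Cl Cu" and i: "i \<in> {1..d}"
  shows "scaling_levy_density (\<nu> i) \<alpha> \<beta> Cl Cu \<eta>4"
proof -
  obtain D where D: "\<forall>x\<in>{0<..<\<eta>4}. (\<nu> i has_real_derivative D x) (at x)" "\<forall>x\<in>{0<..<\<eta>4}. D x < 0"
    using levy i unfolding levy_assms_def by blast
  have nonneg: "\<And>x. x \<noteq> 0 \<Longrightarrow> 0 \<le> \<nu> i x" using levy i unfolding levy_assms_def by blast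
  have pos: "0 < \<nu> i x" if x: "0 < x" "x < \<eta>4" for x
  proof -
    define y where "y = (x + \<eta>4)/2"
    have y: "x < y" "y < \<eta>4" using x by (auto simp: y_def)
    have "\<nu> i y < \<nu> i x"
    proof (rule DERIV_neg_imp_decreasing[OF y(1)])
      fix z assume "x \<le> z" "z \<le> y"
      hence "z \<in> {0<..<\<eta>4}" using x y by auto
      thus "\<exists>D'. DERIV (\<nu> i) z :> D' \<and> D' < 0" using D by blast
    qed
    moreover have "0 \<le> \<nu> i y" using nonneg y x by auto
    ultimately show ?thesis by simp
  qed
  show ?thesis
    unfolding scaling_levy_density_def levy_density_def scaling_levy_density_axioms_def
    using levy i pos by (auto simp: levy_assms_def)
qed

(* trunc_assms says nothing about the value at 0, hence w \<noteq> 0. *)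
lemma trunc_assms_dominated:
  assumes "trunc_assms d \<nu> \<delta>0 \<mu>" "k \<in> {1..d}" "0 < \<delta>" "\<delta> \<le> \<delta>0" "w \<noteq> 0"
    and \<nu>_symmetric: "\<And>x. \<nu> k (-x) = \<nu> k x"
  shows "\<mu> \<delta> k w \<le> \<nu> k w * indicator {x. \<bar>x\<bar> < 2*\<delta>} w"
proof -
  have trunc: "\<forall>x\<in>{0<..\<delta>}. \<mu> \<delta> k x = \<nu> k x" "\<forall>x\<in>{\<delta><..<2*\<delta>}. \<mu> \<delta> k x \<le> \<nu> k x"
      "\<forall>x. 2*\<delta> \<le> x \<longrightarrow> \<mu> \<delta> k x = 0" "\<forall>x. \<mu> \<delta> k (- x) = \<mu> \<delta> k x"
    using assms unfolding trunc_assms_def by auto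
  have "\<mu> \<delta> k \<bar>w\<bar> \<le> \<nu> k \<bar>w\<bar> * indicator {x. \<bar>x\<bar> < 2*\<delta>} \<bar>w\<bar>"
    using trunc assms(3,5) by (cases "\<bar>w\<bar> \<le> \<delta>"; cases "\<bar>w\<bar> < 2*\<delta>") (auto simp: indicator_def)
  moreover have "\<mu> \<delta> k \<bar>w\<bar> = \<mu> \<delta> k w" "\<nu> k \<bar>w\<bar> = \<nu> k w"
    using trunc(4) \<nu>_symmetric by (auto simp: abs_if)
  ultimately show ?thesis by (simp add: indicator_def)
qed

lemma levy_assms_eventually_scaling_bounds:
  assumes "levy_assms d \<nu> \<eta>4 \<alpha> \<beta> Cl Cu" "R \<le> 1"
  shows "eventually (\<lambda>G. \<forall>i\<in>{1..d}. scaling_bounds (\<nu> i) \<alpha> \<beta> \<tau> R G) at_top"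
  using scaling_levy_density.eventually_scaling_bounds[OF levy_assms_scaling_levy_density[OF assms(1)] assms(2)]
  by (intro eventually_ball_finite) auto

theorem lemma3p3:
  fixes d :: nat and \<nu> :: "nat \<Rightarrow> real \<Rightarrow> real" and \<mu> :: "real \<Rightarrow> nat \<Rightarrow> real \<Rightarrow> real"
    and \<eta>4 \<alpha> \<beta> Cl Cu \<delta>0 \<tau> \<delta> :: real
  assumes "levy_assms d \<nu> \<eta>4 \<alpha> \<beta> Cl Cu"
    and "trunc_assms d \<nu> \<delta>0 \<mu>"
    and "0 < \<tau>" and "0 < \<delta>" and "\<delta> \<le> \<delta>0"
  shows "\<exists>c. \<forall>a t i j k. 0 < t \<and> t \<le> \<tau> \<and> i \<in> {1..d} \<and> j \<in> {1..d} \<and> k \<in> {1..d} \<longrightarrow>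
    (LINT w|lborel. min (((\<bar>a\<bar> + \<bar>w\<bar>)\<^sup>2 * \<bar>w\<bar>\<^sup>2) / (hinv (\<nu> i) (1/t))\<^sup>2) 1 * \<mu> \<delta> i w)
       \<le> c * (t powr (\<alpha> / (2*\<beta>)) + \<bar>a\<bar> powr \<alpha> + \<bar>a\<bar>\<^sup>2) / t \<and>
    (LINT w|lborel. min (((\<bar>a\<bar> + \<bar>w\<bar>) * \<bar>w\<bar>\<^sup>2) / (hinv (\<nu> i) (1/t))\<^sup>2) 1 * \<mu> \<delta> i w)
       \<le> c * (t powr (\<alpha> / (3*\<beta>)) + \<bar>a\<bar> powr (\<alpha>/2) + \<bar>a\<bar>) / t \<and>
    (LINT w|lborel. min (((\<bar>a\<bar> + \<bar>w\<bar>)\<^sup>2 * \<bar>w\<bar>\<^sup>2) / (hinv (\<nu> i) (1/t) * hinv (\<nu> j) (1/t))) 1 * \<mu> \<delta> k w)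
       \<le> c * (\<bar>a\<bar> powr \<beta> * t powr (- \<beta>/\<alpha>) + t powr (- \<beta>/(2*\<alpha>))) \<and>
    (LINT w|lborel. min (((\<bar>a\<bar> + \<bar>w\<bar>) * \<bar>w\<bar>\<^sup>2) / (hinv (\<nu> i) (1/t))\<^sup>2) 1 * \<mu> \<delta> k w)
       \<le> c * (\<bar>a\<bar> powr (\<beta>/2) * t powr (- \<beta>/\<alpha>) + t powr (- 2*\<beta>/(3*\<alpha>)))"
proof -
  have "2*\<delta> \<le> 1" using assms(2,5) by (auto simp: trunc_assms_def)
  then obtain G where G: "\<And>i. i \<in> {1..d} \<Longrightarrow> scaling_bounds (\<nu> i) \<alpha> \<beta> \<tau> (2*\<delta>) G"
    using levy_assms_eventually_scaling_bounds[OF assms(1)] unfolding eventually_at_top_linorder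
    by (metis order_refl)
  have dominated: "\<And>i w. i \<in> {1..d} \<Longrightarrow> w \<noteq> 0 \<Longrightarrow> \<mu> \<delta> i w \<le> \<nu> i w * indicator {x. \<bar>x\<bar> < 2*\<delta>} w"
    using trunc_assms_dominated[OF assms(2) _ assms(4,5)] assms(1) by (auto simp: levy_assms_def)
  have hinv: "0 < hinv (\<nu> i) (1/t)" "t powr (1/\<alpha>) / G \<le> hinv (\<nu> i) (1/t)"
    if "i \<in> {1..d}" "0 < t" "t \<le> \<tau>" for i t
    using scaling_bounds.hsq_hinv[OF G] scaling_bounds.hinv_ge[OF G] that by auto
  have "1 \<le> G" using G[of 1] scaling_bounds.G_ge_1 assms(1) by (auto simp: levy_assms_def)
  define c where "c = 2 * G^3 * (1 + 4*\<tau>)"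
  have G3: "1 \<le> G^3" "G\<^sup>2 \<le> G^3" using \<open>1 \<le> G\<close> by (auto intro: one_le_power power_increasing)
  have "2 * G^3 \<le> c" unfolding c_def using G3 \<open>1 \<le> G\<close> assms(3) by (simp add: mult_le_cancel_left1)
  moreover have "2 * G\<^sup>2 * (1 + 4*\<tau>) \<le> c" unfolding c_def using G3 assms(3) by (intro mult_right_mono) auto
  moreover have "0 \<le> G\<^sup>2 * (1 + 4*\<tau>)" using assms(3) by simp
  ultimately have c: "2 * G\<^sup>2 * (1 + 4*\<tau>) \<le> c" "G\<^sup>2 * (1 + 4*\<tau>) \<le> c" "2 * G^3 \<le> c" "G^3 \<le> c"
    using G3 by linarith+
  show ?thesis
    apply (intro exI[of _ c] allI impI conjI; elim conjE)
    subgoal for a t i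
      by (rule order_trans[OF scaling_bounds.integral_min_square_le[OF G _ _ dominated]])
        (use c in \<open>auto intro!: divide_right_mono mult_right_mono\<close>)
    subgoal for a t i
      by (rule order_trans[OF scaling_bounds.integral_min_cube_le[OF G _ _ dominated]])
        (use c in \<open>auto intro!: divide_right_mono mult_right_mono\<close>)
    subgoal for a t i j k
      by (rule order_trans[OF scaling_bounds.integral_min_square_mixed_le[OF G _ hinv(1) hinv(1) hinv(2) hinv(2) dominated]])
        (use c in \<open>auto intro!: mult_right_mono\<close>)
    subgoal for a t i j k
      by (rule order_trans[OF scaling_bounds.integral_min_cube_mixed_le[OF G _ hinv dominated]])
        (use c in \<open>auto intro!: mult_right_mono\<close>)
    done
qed

end
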